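(* Fix a point $X\in\mathbb{P}^3$ and a line $L\subseteq\mathbb{P}^3$, and let $\mathcal{C}=(C_1,\ldots,C_m)$ be a generic camera arrangement. For $i\ne j$ let $F^{ij}$ be the fundamental matrix of the pair $C_i,C_j$. (1) For $x=(x_1,\ldots,x_m)\in(\mathbb{P}^2)^m$: $x\in\mathcal{M}_\mathcal{C}^L$ if and only if $x_1^TF^{1j}x_j=0$ for every $j=2,\ldots,m$ and $x_i^T(C_i\cdot L)=0$ for every $i=1,\ldots,m$. (2) For $\ell=(\ell_1,\ldots,\ell_m)\in(\mathbb{P}^2)^m$: $\ell\in\mathcal{L}_\mathcal{C}^X$ if and only if $$\det\begin{bmatrix}C_1^T\ell_1 & C_2^T\ell_2 & C_i^T\ell_i\end{bmatrix}=0\quad\text{and}\quad \det\begin{bmatrix}C_1^T\ell_1 & C_3^T\ell_3 & C_i^T\ell_i\end{bmatrix}=0$$ for each $i=3,\ldots,m$, and $\ell_i^TC_iX=0$ for every $i=1,\ldots,m$.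
   Context: All spaces are complex projective. A camera is a full-rank $3\times4$ complex matrix $C:\mathbb{P}^3\dashrightarrow\mathbb{P}^2$ with center its kernel; a camera arrangement $\mathcal{C}=(C_1,\ldots,C_m)$, $m\ge2$, has pairwise distinct centers. The determinant conditions are on $4\times 3$ matrices and mean the rank is less than 3 (i.e. the columns are linearly dependent); equivalently, the maximal minors vanish. For a line $L$ spanned by $u,v$, $C\cdot L:=Cu\times Cv\in\mathbb{P}^2$. $\mathcal{M}_\mathcal{C}^L$ is the Zariski closure of the image of $L\ni Y\mapsto(C_1Y,\ldots,C_mY)$; $\mathcal{L}_\mathcal{C}^X$ is the Zariski closure of the image of $\Lambda(X)\ni L'\mapsto(C_1\cdot L',\ldots,C_m\cdot L')$, where $\Lambda(X)$ is the set of lines through $X$. "Generic" means for all camera arrangements outside a proper Zariski closed subset. *)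

theory Defs
  imports "HOL-Analysis.Analysis"
begin

text \<open>Points of complex projective space are represented by nonzero vectors of
  complex^3 resp. complex^4 (homogeneous coordinates).  All conditions below are
  homogeneous in each representative.  Cameras are indexed 0..m-1 (paper: 1..m).\<close>

definition tdot :: "complex^'n \<Rightarrow> complex^'n \<Rightarrow> complex" where
  "tdot x y = (\<Sum>k\<in>UNIV. x $ k * y $ k)"

definition cross3c :: "complex^3 \<Rightarrow> complex^3 \<Rightarrow> complex^3" where
  "cross3c x y = (\<chi> i. x $ (i+1) * y $ (i+2) - x $ (i+2) * y $ (i+1))"

definition camera :: "complex^4^3 \<Rightarrow> bool" where
  "camera C \<longleftrightarrow> rank C = 3"

definition center :: "complex^4^3 \<Rightarrow> (complex^4) set" where
  "center C = {Y. C *v Y = 0}"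

definition camera_arrangement :: "nat \<Rightarrow> (nat \<Rightarrow> complex^4^3) \<Rightarrow> bool" where
  "camera_arrangement m C \<longleftrightarrow> m \<ge> 2 \<and> (\<forall>i<m. camera (C i)) \<and>
     (\<forall>i<m. \<forall>j<m. i \<noteq> j \<longrightarrow> center (C i) \<noteq> center (C j))"

text \<open>C . L := C u \<times> C v for the line spanned by u, v.\<close>
definition cam_line :: "complex^4^3 \<Rightarrow> complex^4 \<Rightarrow> complex^4 \<Rightarrow> complex^3" where
  "cam_line C u v = cross3c (C *v u) (C *v v)"

definition lin_indep2 :: "complex^4 \<Rightarrow> complex^4 \<Rightarrow> bool" where
  "lin_indep2 u v \<longleftrightarrow> (\<forall>a b. a *s u + b *s v = 0 \<longrightarrow> a = 0 \<and> b = 0)"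

definition in_span2 :: "complex^4 \<Rightarrow> complex^4 \<Rightarrow> complex^4 \<Rightarrow> bool" where
  "in_span2 Y u v \<longleftrightarrow> (\<exists>a b. Y = a *s u + b *s v)"

text \<open>Fundamental matrix of the pair (A, B) (Hartley--Zisserman (17.3)):
  F_kl = (-1)^(k+l) det [A without row k; B without row l], written with cyclic
  row order, so that x^T F y = 0 is the epipolar constraint for x in image A, y in image B.\<close>
definition fundamental :: "complex^4^3 \<Rightarrow> complex^4^3 \<Rightarrow> complex^3^3" where
  "fundamental A B = (\<chi> k l. det (\<chi> r::4. if r = 1 then A $ (k+1) else if r = 2 then A $ (k+2)
       else if r = 3 then B $ (l+1) else B $ (l+2)))"

text \<open>Columns of a 4x3 matrix [a b c] are linearly dependent (rank < 3).\<close>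
definition cols_dependent3 :: "complex^4 \<Rightarrow> complex^4 \<Rightarrow> complex^4 \<Rightarrow> bool" where
  "cols_dependent3 a b c \<longleftrightarrow>
     (\<exists>s t w. (s, t, w) \<noteq> (0, 0, 0) \<and> s *s a + t *s b + w *s c = 0)"

inductive_set polyfun :: "('a \<Rightarrow> complex) set \<Rightarrow> ('a \<Rightarrow> complex) set" for V where
  const: "(\<lambda>_. c) \<in> polyfun V"
| var: "f \<in> V \<Longrightarrow> f \<in> polyfun V"
| add: "p \<in> polyfun V \<Longrightarrow> q \<in> polyfun V \<Longrightarrow> (\<lambda>z. p z + q z) \<in> polyfun V"
| mult: "p \<in> polyfun V \<Longrightarrow> q \<in> polyfun V \<Longrightarrow> (\<lambda>z. p z * q z) \<in> polyfun V"

definition zclosure :: "('a \<Rightarrow> complex) set \<Rightarrow> 'a set \<Rightarrow> 'a set" where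
  "zclosure V S = {z. \<forall>p\<in>polyfun V. (\<forall>y\<in>S. p y = 0) \<longrightarrow> p z = 0}"

definition zariski_closed :: "('a \<Rightarrow> complex) set \<Rightarrow> 'a set \<Rightarrow> bool" where
  "zariski_closed V Z \<longleftrightarrow> (\<exists>P \<subseteq> polyfun V. Z = {z. \<forall>p\<in>P. p z = 0})"

definition cam_coords :: "nat \<Rightarrow> ((nat \<Rightarrow> complex^4^3) \<Rightarrow> complex) set" where
  "cam_coords m = {(\<lambda>C. C i $ r $ c) | i r c. i < m}"

definition img_coords :: "nat \<Rightarrow> ((nat \<Rightarrow> complex^3) \<Rightarrow> complex) set" where
  "img_coords m = {(\<lambda>x. x i $ r) | i r. i < m}"

definition generic_arr :: "nat \<Rightarrow> ((nat \<Rightarrow> complex^4^3) \<Rightarrow> bool) \<Rightarrow> bool" where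
  "generic_arr m P \<longleftrightarrow> (\<exists>Z. zariski_closed (cam_coords m) Z \<and> Z \<noteq> UNIV \<and>
      (\<forall>C. camera_arrangement m C \<and> C \<notin> Z \<longrightarrow> P C))"

text \<open>Multiprojective Zariski closure in (P^2)^m, via the multi-cone of representatives:
  a tuple of nonzero representatives lies in the closure of S \<subseteq> (P^2)^m iff it lies in the
  affine Zariski closure of the multi-cone over S.\<close>
definition multiproj_closure :: "nat \<Rightarrow> (nat \<Rightarrow> complex^3) set \<Rightarrow> (nat \<Rightarrow> complex^3) set" where
  "multiproj_closure m S = {x. (\<forall>i<m. x i \<noteq> 0) \<and> x \<in> zclosure (img_coords m) S}"

text \<open>Multi-cone of the image of L \<ni> Y \<mapsto> (C_1 Y, ..., C_m Y), L = span{u,v}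
  (the rational map is defined where no C_i Y vanishes).\<close>
definition point_image_cone :: "nat \<Rightarrow> (nat \<Rightarrow> complex^4^3) \<Rightarrow> complex^4 \<Rightarrow> complex^4 \<Rightarrow> (nat \<Rightarrow> complex^3) set" where
  "point_image_cone m C u v = {x. \<exists>Y. in_span2 Y u v \<and> Y \<noteq> 0 \<and>
      (\<forall>i<m. C i *v Y \<noteq> 0 \<and> (\<exists>c. c \<noteq> 0 \<and> x i = c *s (C i *v Y)))}"

definition M_L :: "nat \<Rightarrow> (nat \<Rightarrow> complex^4^3) \<Rightarrow> complex^4 \<Rightarrow> complex^4 \<Rightarrow> (nat \<Rightarrow> complex^3) set" where
  "M_L m C u v = multiproj_closure m (point_image_cone m C u v)"

text \<open>Multi-cone of the image of \<Lambda>(X) \<ni> L' \<mapsto> (C_1.L', ..., C_m.L').\<close>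
definition line_image_cone :: "nat \<Rightarrow> (nat \<Rightarrow> complex^4^3) \<Rightarrow> complex^4 \<Rightarrow> (nat \<Rightarrow> complex^3) set" where
  "line_image_cone m C X = {l. \<exists>u v. lin_indep2 u v \<and> in_span2 X u v \<and>
      (\<forall>i<m. cam_line (C i) u v \<noteq> 0 \<and> (\<exists>c. c \<noteq> 0 \<and> l i = c *s cam_line (C i) u v))}"

definition L_X :: "nat \<Rightarrow> (nat \<Rightarrow> complex^4^3) \<Rightarrow> complex^4 \<Rightarrow> (nat \<Rightarrow> complex^3) set" where
  "L_X m C X = multiproj_closure m (line_image_cone m C X)"

end

theory Submission
  imports Defs "HOL-Computational_Algebra.Polynomial"
begin

text \<open>
  (1) Image tuples of points \<open>Y \<in> L\<close> satisfy the incidence conditions, since \<open>C\<^sub>i Y\<close> lies on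
  the image line \<open>C\<^sub>i \<cdot> L\<close>, and the epipolar conditions, since \<open>x\<^sup>T F y\<close> for \<open>x = A Y\<close>,
  \<open>y = B W\<close> is the determinant \<open>det[c\<^sub>A, Y, c\<^sub>B, W]\<close> of the two centers and the two space
  points. Conversely, incidence lifts every \<open>x\<^sub>i\<close> to a point of \<open>L\<close>, and as \<open>L\<close> is skew to the
  baselines through the first center, the epipolar conditions force all lifts to coincide.

  (2) For a line through \<open>X\<close> the back-projected planes \<open>C\<^sub>i\<^sup>T \<ell>\<^sub>i\<close> all contain that line, so
  any three of them are dependent. Conversely the rank conditions give a line \<open>XY\<close> contained in
  all back-projected planes. It is imaged to \<open>\<ell>\<close> unless it meets a center; it meets at most
  one, and then rotating the line about \<open>X\<close> shows that \<open>\<ell>\<close> is a limit of image tuples, hence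
  in the Zariski closure.

  Every hypothesis used is the nonvanishing of a polynomial in the camera entries that is
  nonzero at explicit cameras, and these finitely many conditions combine because along a line
  in parameter space a product of nonzero polynomials restricts to a nonzero univariate one.
\<close>

section \<open>The bilinear pairing and the cross product\<close>

lemma tdot_3: "tdot (x::complex^3) y = x$1 * y$1 + x$2 * y$2 + x$3 * y$3"
  by (simp add: tdot_def sum_3)

lemma tdot_4: "tdot (x::complex^4) y = x$1 * y$1 + x$2 * y$2 + x$3 * y$3 + x$4 * y$4"
  by (simp add: tdot_def sum_4)

lemma tdot_commute: "tdot x y = tdot y x"
  by (simp add: tdot_def mult.commute)

lemma tdot_add_left: "tdot (x + y) z = tdot x z + tdot y z"
  and tdot_add_right: "tdot z (x + y) = tdot z x + tdot z y"
  and tdot_diff_right: "tdot z (x - y) = tdot z x - tdot z y"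
  and tdot_scale_left: "tdot (a *s x) z = a * tdot x z"
  and tdot_scale_right: "tdot z (a *s x) = a * tdot z x"
  by (simp_all add: tdot_def sum.distrib sum_subtractf sum_distrib_left algebra_simps)

lemma tdot_zero [simp]: "tdot 0 z = 0" "tdot z 0 = 0"
  by (simp_all add: tdot_def)

lemma axis_1_nth: "axis i (1::'a::zero_neq_one) $ j = (if i = j then 1 else 0)"
  by (simp add: axis_def)

lemma tdot_axis: "tdot (axis k 1) q = q $ k" "tdot q (axis k 1) = q $ k"
proof -
  have "axis k 1 $ j * q $ j = (if j = k then q $ k else 0)" for j
    by (simp add: axis_1_nth)
  then show "tdot (axis k 1) q = q $ k" "tdot q (axis k 1) = q $ k"
    by (simp_all add: tdot_def mult.commute)
qed

lemma matrix_vector_mult_nth: "(A *v x) $ r = tdot (A $ r) x"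
  by (simp add: matrix_vector_mult_def tdot_def)

lemma tdot_matrix_vector_mult: "tdot l (A *v y) = tdot (transpose A *v l) y"
  unfolding tdot_def matrix_vector_mult_def transpose_def
  by (simp add: sum_distrib_left sum_distrib_right mult.assoc mult.left_commute) (rule sum.swap)

lemma exists_axis_tdot_nonzero: "x \<noteq> 0 \<Longrightarrow> \<exists>k. tdot (axis k 1) x \<noteq> 0"
  by (auto simp: tdot_axis vec_eq_iff)

lemma cross3c_nth:
  "cross3c x y $ 1 = x$2 * y$3 - x$3 * y$2"
  "cross3c x y $ 2 = x$3 * y$1 - x$1 * y$3"
  "cross3c x y $ 3 = x$1 * y$2 - x$2 * y$1"
proof -
  have mod3: "(4::3) = 1" "(5::3) = 2" by simp_all
  show "cross3c x y $ 1 = x$2 * y$3 - x$3 * y$2" "cross3c x y $ 2 = x$3 * y$1 - x$1 * y$3"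
    "cross3c x y $ 3 = x$1 * y$2 - x$2 * y$1"
    by (simp_all add: cross3c_def mod3)
qed

lemma tdot_cross3c_self:
  "tdot p (cross3c p q) = 0" "tdot q (cross3c p q) = 0"
  "tdot (cross3c p q) p = 0" "tdot (cross3c p q) q = 0"
  by (simp_all add: tdot_3 cross3c_nth algebra_simps)

lemma cross3c_cross3c: "cross3c a (cross3c b c) = tdot a c *s b - tdot a b *s c"
  by (simp add: vec_eq_iff forall_3 cross3c_nth tdot_3 algebra_simps)

lemma cross3c_add_right: "cross3c p (q + w) = cross3c p q + cross3c p w"
  and cross3c_scale_left: "cross3c (a *s p) q = a *s cross3c p q"
  and cross3c_scale_right: "cross3c p (a *s q) = a *s cross3c p q"
  and cross3c_add_left: "cross3c (p + w) q = cross3c p q + cross3c w q"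
  and cross3c_same: "cross3c p p = 0"
  by (simp_all add: vec_eq_iff forall_3 cross3c_nth algebra_simps)

lemma cross3c_zero [simp]: "cross3c 0 p = 0" "cross3c p 0 = 0"
  by (simp_all add: vec_eq_iff forall_3 cross3c_nth)

lemma cross3c_eq_0_if_dependent:
  assumes "s *s p + t *s q = 0" and "(s, t) \<noteq> (0, 0)"
  shows "cross3c p q = 0"
proof -
  have "s *s cross3c p q = 0" "t *s cross3c p q = 0"
    using arg_cong[OF assms(1), of "\<lambda>x. cross3c x q"] arg_cong[OF assms(1), of "cross3c p"]
    by (simp_all add: cross3c_add_left cross3c_add_right cross3c_scale_left cross3c_scale_right
        cross3c_same)
  then show ?thesis using assms(2) by auto
qed

lemma dependent_if_cross3c_eq_0:
  assumes "cross3c p q = 0"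
  shows "\<exists>s t. (s, t) \<noteq> (0, 0) \<and> s *s p + t *s q = 0"
proof (cases "p = 0")
  case True
  then show ?thesis by (intro exI[of _ 1] exI[of _ 0]) simp
next
  case False
  then obtain k where k: "p $ k \<noteq> 0" by (auto simp: vec_eq_iff)
  have "q$k *s p - p$k *s q = 0"
    using arg_cong[OF assms, of "cross3c (axis k 1)"] by (simp add: cross3c_cross3c tdot_axis)
  then show ?thesis using k by (intro exI[of _ "q$k"] exI[of _ "- p$k"]) (simp add: algebra_simps)
qed

lemma orthogonal_cross3c_imp_in_span:
  assumes "cross3c p q \<noteq> 0" and "tdot x (cross3c p q) = 0"
  shows "\<exists>a b. x = a *s p + b *s q"
proof -
  obtain k where k: "cross3c p q $ k \<noteq> 0" using assms(1) by (auto simp: vec_eq_iff)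
  have "tdot (cross3c p q) r *s x =
      tdot (cross3c x q) r *s p + tdot (cross3c p x) r *s q + tdot (cross3c p q) x *s r" for r
    by (simp add: vec_eq_iff forall_3 cross3c_nth tdot_3 algebra_simps)
  from this[of "axis k 1"] have "cross3c p q $ k *s x = cross3c x q $ k *s p + cross3c p x $ k *s q"
    using assms(2) by (simp add: tdot_axis tdot_commute)
  then have "x = (cross3c x q $ k / cross3c p q $ k) *s p + (cross3c p x $ k / cross3c p q $ k) *s q"
    using k by (simp add: vec_eq_iff field_simps)
  then show ?thesis by blast
qed

lemma orthogonal_both_imp_parallel_cross3c:
  assumes "cross3c p q \<noteq> 0" and "tdot l p = 0" and "tdot l q = 0"
  shows "\<exists>c. l = c *s cross3c p q"
proof -
  obtain k where k: "cross3c p q $ k \<noteq> 0" using assms(1) by (auto simp: vec_eq_iff)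
  have "tdot (cross3c p q) r *s l =
      tdot l p *s cross3c q r + tdot l q *s cross3c r p + tdot l r *s cross3c p q" for r
    by (simp add: vec_eq_iff forall_3 cross3c_nth tdot_3 algebra_simps)
  from this[of "axis k 1"] have "cross3c p q $ k *s l = l $ k *s cross3c p q"
    using assms(2,3) by (simp add: tdot_axis)
  then have "l = (l $ k / cross3c p q $ k) *s cross3c p q"
    using k by (simp add: vec_eq_iff field_simps)
  then show ?thesis by blast
qed

lemma lin_indep2_nonzero: "lin_indep2 u v \<Longrightarrow> u \<noteq> 0 \<and> v \<noteq> 0"
  unfolding lin_indep2_def by (metis add_0 one_neq_zero vector_smult_lzero vector_smult_rzero)

lemma lin_indep2_commute: "lin_indep2 u v \<longleftrightarrow> lin_indep2 v u"
  unfolding lin_indep2_def by (metis add.commute)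

lemma lin_indep2_has_nonzero_minor:
  assumes "lin_indep2 u v"
  shows "\<exists>a b. u$a * v$b - u$b * v$a \<noteq> 0"
proof (rule ccontr)
  assume "\<not> ?thesis"
  then have minors: "u$a * v$b - u$b * v$a = 0" for a b by blast
  obtain a where a: "u $ a \<noteq> 0" using lin_indep2_nonzero[OF assms] by (auto simp: vec_eq_iff)
  have "(v$a) *s u + (- u$a) *s v = 0"
    using minors[of a] by (simp add: vec_eq_iff algebra_simps)
  with assms have "- u$a = 0" unfolding lin_indep2_def by blast
  then show False using a by simp
qed


section \<open>Determinants of four vectors\<close>

definition rows4 :: "'a^'n \<Rightarrow> 'a^'n \<Rightarrow> 'a^'n \<Rightarrow> 'a^'n \<Rightarrow> 'a^'n^4" where
  "rows4 a b c d = (\<chi> r. if r = 1 then a else if r = 2 then b else if r = 3 then c else d)"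

definition det4 :: "complex^4 \<Rightarrow> complex^4 \<Rightarrow> complex^4 \<Rightarrow> complex^4 \<Rightarrow> complex" where
  "det4 a b c d = det (rows4 a b c d)"

lemma det_4:
  "det (A::'a::comm_ring_1^4^4) = A$1$1 * A$2$2 * A$3$3 * A$4$4 - A$1$1 * A$2$2 * A$3$4 * A$4$3 - A$1$1 * A$2$3 * A$3$2 * A$4$4 + A$1$1 * A$2$3 * A$3$4 * A$4$2 + A$1$1 * A$2$4 * A$3$2 * A$4$3 - A$1$1 * A$2$4 * A$3$3 * A$4$2 - A$1$2 * A$2$1 * A$3$3 * A$4$4 + A$1$2 * A$2$1 * A$3$4 * A$4$3 + A$1$2 * A$2$3 * A$3$1 * A$4$4 - A$1$2 * A$2$3 * A$3$4 * A$4$1 - A$1$2 * A$2$4 * A$3$1 * A$4$3 + A$1$2 * A$2$4 * A$3$3 * A$4$1 + A$1$3 * A$2$1 * A$3$2 * A$4$4 - A$1$3 * A$2$1 * A$3$4 * A$4$2 - A$1$3 * A$2$2 * A$3$1 * A$4$4 + A$1$3 * A$2$2 * A$3$4 * A$4$1 + A$1$3 * A$2$4 * A$3$1 * A$4$2 - A$1$3 * A$2$4 * A$3$2 * A$4$1 - A$1$4 * A$2$1 * A$3$2 * A$4$3 + A$1$4 * A$2$1 * A$3$3 * A$4$2 + A$1$4 * A$2$2 * A$3$1 * A$4$3 - A$1$4 * A$2$2 * A$3$3 * A$4$1 - A$1$4 * A$2$3 * A$3$1 * A$4$2 + A$1$4 * A$2$3 * A$3$2 * A$4$1"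
proof -
  have f1: "finite {2::4, 3, 4}" "1 \<notin> {2::4, 3, 4}" by auto
  have f2: "finite {3::4, 4}" "2 \<notin> {3::4, 4}" by auto
  have f3: "finite {4::4}" "3 \<notin> {4::4}" by auto
  show ?thesis
    unfolding det_def UNIV_4
    unfolding sum_over_permutations_insert[OF f1] sum_over_permutations_insert[OF f2]
      sum_over_permutations_insert[OF f3] permutes_sing
    by (simp add: sign_swap_id permutation_swap_id permutation_compose sign_compose sign_id
        swap_id_eq algebra_simps)
qed

lemma det4_expand: "det4 a b c d = a$1 * b$2 * c$3 * d$4 - a$1 * b$2 * c$4 * d$3 - a$1 * b$3 * c$2 * d$4 + a$1 * b$3 * c$4 * d$2 + a$1 * b$4 * c$2 * d$3 - a$1 * b$4 * c$3 * d$2 - a$2 * b$1 * c$3 * d$4 + a$2 * b$1 * c$4 * d$3 + a$2 * b$3 * c$1 * d$4 - a$2 * b$3 * c$4 * d$1 - a$2 * b$4 * c$1 * d$3 + a$2 * b$4 * c$3 * d$1 + a$3 * b$1 * c$2 * d$4 - a$3 * b$1 * c$4 * d$2 - a$3 * b$2 * c$1 * d$4 + a$3 * b$2 * c$4 * d$1 + a$3 * b$4 * c$1 * d$2 - a$3 * b$4 * c$2 * d$1 - a$4 * b$1 * c$2 * d$3 + a$4 * b$1 * c$3 * d$2 + a$4 * b$2 * c$1 * d$3 - a$4 * b$2 * c$3 * d$1 - a$4 * b$3 * c$1 * d$2 + a$4 * b$3 * c$2 * d$1"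
  unfolding det4_def det_4 by (simp add: rows4_def)

lemma det4_repeated:
  "det4 a b c a = 0" "det4 a b c b = 0" "det4 a b c c = 0"
  "det4 a b a d = 0" "det4 a b b d = 0" "det4 a a c d = 0"
  by (simp add: det4_expand; algebra)+

lemma det4_rotate: "det4 a b c d = - det4 b c d a"
  by (simp add: det4_expand; algebra)

lemma det4_zero: "det4 0 b c d = 0" "det4 a 0 c d = 0" "det4 a b 0 d = 0"
  by (simp_all add: det4_expand)

lemma det4_lincomb:
  "det4 (s *s a + t *s b + w *s c) b c d = s * det4 a b c d"
  "det4 a (s *s a + t *s b + w *s c) c d = t * det4 a b c d"
  "det4 a b (s *s a + t *s b + w *s c) d = w * det4 a b c d"
  by (simp add: det4_expand; algebra)+

lemma rows4_mult_vector:
  "rows4 a b c d *v x =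
     (\<chi> r. if r = 1 then tdot a x else if r = 2 then tdot b x else if r = 3 then tdot c x else tdot d x)"
  by (simp add: vec_eq_iff matrix_vector_mult_nth rows4_def)

lemma det4_nonzero_orthogonal_imp_0:
  assumes "det4 a b c d \<noteq> 0"
    and "tdot a x = 0" "tdot b x = 0" "tdot c x = 0" "tdot d x = 0"
  shows "x = 0"
proof -
  obtain B where B: "B ** rows4 a b c d = mat 1"
    using assms(1) by (auto simp: det4_def invertible_det_nz[symmetric] invertible_def)
  have "rows4 a b c d *v x = 0" using assms(2-5) by (simp add: rows4_mult_vector vec_eq_iff)
  then have "B *v (rows4 a b c d *v x) = 0" by simp
  then show ?thesis by (simp add: matrix_vector_mul_assoc B)
qed

lemma det4_nonzero_solvable:
  assumes "det4 a b c d \<noteq> 0"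
  shows "\<exists>x. tdot a x = p \<and> tdot b x = q \<and> tdot c x = r \<and> tdot d x = s"
proof -
  obtain B where B: "rows4 a b c d ** B = mat 1"
    using assms(1) by (auto simp: det4_def invertible_det_nz[symmetric] invertible_def)
  define rhs :: "complex^4" where "rhs = (\<chi> i. if i = 1 then p else if i = 2 then q else if i = 3 then r else s)"
  have "rows4 a b c d *v (B *v rhs) = rhs" by (simp add: matrix_vector_mul_assoc B)
  then have "(rows4 a b c d *v (B *v rhs)) $ i = rhs $ i" for i by simp
  from this[of 1] this[of 2] this[of 3] this[of 4] show ?thesis
    by (intro exI[of _ "B *v rhs"]) (simp add: rows4_mult_vector rhs_def)
qed

definition cross4 :: "complex^4 \<Rightarrow> complex^4 \<Rightarrow> complex^4 \<Rightarrow> complex^4" where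
  "cross4 a b c = (\<chi> j. det4 a b c (axis j 1))"

lemma tdot_cross4: "tdot (cross4 a b c) d = det4 a b c d"
  by (simp add: cross4_def tdot_4 det4_expand axis_1_nth algebra_simps)

lemma det4_eq_0_if_cols_dependent3:
  assumes "cols_dependent3 a b c"
  shows "det4 a b c d = 0"
proof -
  obtain s t w where stw: "(s, t, w) \<noteq> (0, 0, 0)" "s *s a + t *s b + w *s c = 0"
    using assms unfolding cols_dependent3_def by blast
  have "s * det4 a b c d = 0" "t * det4 a b c d = 0" "w * det4 a b c d = 0"
    using det4_lincomb[where s=s and t=t and w=w and a=a and b=b and c=c and d=d] stw(2) by (simp_all add: det4_zero)
  then show ?thesis using stw(1) by auto
qed

lemma exists_vector_not_in_span:
  assumes "finite S" and "card S < 4"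
  shows "\<exists>d::complex^4. d \<notin> vec.span S"
proof (rule ccontr)
  assume "\<not> ?thesis"
  then have "UNIV \<subseteq> vec.span S" by auto
  then have "vec.dim (UNIV::(complex^4) set) \<le> card S"
    using vec.dim_le_card assms(1) by blast
  then show False using assms(2) vec_dim_card[where 'a=complex and 'n=4] by simp
qed

lemma exists_det4_nonzero_if_not_cols_dependent3:
  assumes "\<not> cols_dependent3 a b c"
  shows "\<exists>d. det4 a b c d \<noteq> 0"
proof -
  have "card {a, b, c} \<le> 3" by (auto simp: card_insert_if)
  then obtain d where d: "d \<notin> vec.span {a, b, c}"
    using exists_vector_not_in_span[of "{a, b, c}"] by auto
  have "det4 a b c d \<noteq> 0"
  proof
    assume "det4 a b c d = 0"
    then have "\<not> invertible (rows4 a b c d)" by (simp add: det4_def invertible_det_nz)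
    then obtain k where k: "(\<Sum>i\<in>UNIV. k i *s row i (rows4 a b c d)) = 0" "\<exists>i. k i \<noteq> 0"
      unfolding invertible_right_inverse matrix_right_invertible_independent_rows by blast
    have "row 1 (rows4 a b c d) = a" "row 2 (rows4 a b c d) = b" "row 3 (rows4 a b c d) = c"
      "row 4 (rows4 a b c d) = d"
      by (simp_all add: row_def rows4_def)
    with k(1) have rel: "k 1 *s a + k 2 *s b + k 3 *s c + k 4 *s d = 0"
      by (simp add: sum_4)
    show False
    proof (cases "k 4 = 0")
      case True
      obtain i where "k i \<noteq> 0" using k(2) by blast
      then have "(k 1, k 2, k 3) \<noteq> (0, 0, 0)" using True exhaust_4[of i] by auto
      moreover have "k 1 *s a + k 2 *s b + k 3 *s c = 0" using rel True by simp
      ultimately show False using assms unfolding cols_dependent3_def by blast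
    next
      case False
      have "- (k 1 *s a + k 2 *s b + k 3 *s c) = k 4 *s d"
        by (metis rel neg_eq_iff_add_eq_0)
      then have "(1 / k 4) *s (k 4 *s d) = (1 / k 4) *s (- (k 1 *s a + k 2 *s b + k 3 *s c))"
        by (simp only:)
      then have "d = (- 1 / k 4) *s (k 1 *s a + k 2 *s b + k 3 *s c)"
        using False by (simp add: vector_smult_assoc)
      moreover have "(- 1 / k 4) *s (k 1 *s a + k 2 *s b + k 3 *s c) \<in> vec.span {a, b, c}"
        by (intro vec.span_scale vec.span_add) (auto intro: vec.span_base)
      ultimately show False using d by simp
    qed
  qed
  then show ?thesis by blast
qed

lemma cols_dependent3_if_orthogonal_pair:
  assumes "lin_indep2 u v"
    and "tdot a u = 0" "tdot b u = 0" "tdot c u = 0" "tdot a v = 0" "tdot b v = 0" "tdot c v = 0"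
  shows "cols_dependent3 a b c"
proof (rule ccontr)
  assume "\<not> cols_dependent3 a b c"
  then obtain d where D: "det4 a b c d \<noteq> 0" using exists_det4_nonzero_if_not_cols_dependent3 by blast
  have "tdot d v *s u + (- tdot d u) *s v = 0"
    by (rule det4_nonzero_orthogonal_imp_0[OF D])
      (simp_all add: assms tdot_add_right tdot_diff_right tdot_scale_right algebra_simps)
  then have "tdot d v = 0 \<and> - tdot d u = 0" using assms(1) unfolding lin_indep2_def by blast
  then have "u = 0" using D assms(2-4) det4_nonzero_orthogonal_imp_0 by simp
  then show False using lin_indep2_nonzero[OF assms(1)] by simp
qed

lemma cols_dependent3_if_in_span2:
  assumes "in_span2 p x y" and "in_span2 q x y"
  shows "cols_dependent3 x p q"
proof (rule ccontr)
  assume "\<not> cols_dependent3 x p q"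
  then obtain d where "det4 x p q d \<noteq> 0" using exists_det4_nonzero_if_not_cols_dependent3 by blast
  moreover obtain a b a' b' where "p = a *s x + b *s y" "q = a' *s x + b' *s y"
    using assms unfolding in_span2_def by blast
  moreover have "det4 x (a *s x + b *s y) (a' *s x + b' *s y) d = 0"
    by (simp add: det4_expand; algebra)
  ultimately show False by simp
qed

lemma tdot_eq_0_if_cols_dependent3:
  assumes "cols_dependent3 a b c" and "lin_indep2 a b" and "tdot a y = 0" "tdot b y = 0"
  shows "tdot c y = 0"
proof -
  obtain s t w where stw: "(s, t, w) \<noteq> (0, 0, 0)" "s *s a + t *s b + w *s c = 0"
    using assms(1) unfolding cols_dependent3_def by blast
  have "w \<noteq> 0" using stw assms(2) unfolding lin_indep2_def by auto
  moreover have "w * tdot c y = 0"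
    using arg_cong[OF stw(2), of "\<lambda>z. tdot z y"] assms(3,4) by (simp add: tdot_add_left tdot_scale_left)
  ultimately show ?thesis by simp
qed

lemma tdot_eq_0_if_not_lin_indep2:
  assumes "\<not> lin_indep2 a b" and "a \<noteq> 0" and "tdot a y = 0"
  shows "tdot b y = 0"
proof -
  obtain s t where st: "\<not> (s = 0 \<and> t = 0)" "s *s a + t *s b = 0"
    using assms(1) unfolding lin_indep2_def by blast
  have "t \<noteq> 0" using st assms(2) by auto
  moreover have "t * tdot b y = 0"
    using arg_cong[OF st(2), of "\<lambda>z. tdot z y"] assms(3) by (simp add: tdot_add_left tdot_scale_left)
  ultimately show ?thesis by simp
qed

lemma exists_axes_det4_nonzero:
  assumes "x \<noteq> 0"
  shows "\<exists>c d e. det4 (axis c 1) (axis d 1) (axis e 1) x \<noteq> 0"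
proof (rule ccontr)
  assume "\<not> ?thesis"
  then have H: "det4 (axis c 1) (axis d 1) (axis e 1) x = 0" for c d e by blast
  have "x$1 = 0" "x$2 = 0" "x$3 = 0" "x$4 = 0"
    using H[of 2 3 4] H[of 1 3 4] H[of 1 2 4] H[of 1 2 3] by (simp_all add: det4_expand axis_1_nth)
  then show False using assms by (simp add: vec_eq_iff forall_4)
qed

lemma exists_axes_det4_uv_nonzero:
  assumes "lin_indep2 u v"
  shows "\<exists>c d. det4 (axis c 1) u (axis d 1) v \<noteq> 0"
proof (rule ccontr)
  assume "\<not> ?thesis"
  then have H: "det4 (axis c 1) u (axis d 1) v = 0" for c d by blast
  have "u$3 * v$4 = u$4 * v$3" "u$2 * v$4 = u$4 * v$2" "u$2 * v$3 = u$3 * v$2"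
    "u$1 * v$4 = u$4 * v$1" "u$1 * v$3 = u$3 * v$1" "u$1 * v$2 = u$2 * v$1"
    using H[of 1 2] H[of 1 3] H[of 1 4] H[of 2 3] H[of 2 4] H[of 3 4]
    by (simp_all add: det4_expand axis_1_nth; algebra)+
  then have "u$a * v$b - u$b * v$a = 0" for a b
    using exhaust_4[of a] exhaust_4[of b] by (elim disjE) simp_all
  then show False using lin_indep2_has_nonzero_minor[OF assms] by blast
qed


section \<open>Cameras\<close>

definition center_vec :: "complex^4^3 \<Rightarrow> complex^4" where
  "center_vec A = cross4 (A$1) (A$2) (A$3)"

lemma tdot_center_vec: "tdot (center_vec A) d = det4 (A$1) (A$2) (A$3) d"
  by (simp add: center_vec_def tdot_cross4)

lemma matrix_vector_mult_center_vec: "A *v center_vec A = 0"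
proof -
  have "(A *v center_vec A) $ r = det4 (A$1) (A$2) (A$3) (A$r)" for r
    by (simp add: matrix_vector_mult_nth tdot_commute tdot_center_vec)
  moreover have "det4 (A$1) (A$2) (A$3) (A$r) = 0" for r
    using exhaust_3[of r] by (auto simp: det4_repeated)
  ultimately show ?thesis by (simp add: vec_eq_iff)
qed

lemma center_vec_nonzero_imp_det4:
  assumes "center_vec A \<noteq> 0"
  obtains j where "det4 (A$1) (A$2) (A$3) (axis j 1) \<noteq> 0"
  using assms by (auto simp: vec_eq_iff center_vec_def cross4_def)

lemma transpose_mult_vector_3:
  "transpose (A::complex^4^3) *v l = l$1 *s A$1 + l$2 *s A$2 + l$3 *s A$3"
  by (simp add: vec_eq_iff matrix_vector_mult_def transpose_def sum_3 mult.commute)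

lemma transpose_mult_eq_0_imp:
  assumes "center_vec A \<noteq> 0" and "transpose A *v l = 0"
  shows "l = 0"
proof (rule ccontr)
  assume "l \<noteq> 0"
  then have "(l$1, l$2, l$3) \<noteq> (0, 0, 0)" by (auto simp: vec_eq_iff forall_3)
  moreover have "l$1 *s A$1 + l$2 *s A$2 + l$3 *s A$3 = 0"
    using assms(2) by (simp only: transpose_mult_vector_3)
  ultimately have "cols_dependent3 (A$1) (A$2) (A$3)" unfolding cols_dependent3_def by blast
  moreover obtain j where "det4 (A$1) (A$2) (A$3) (axis j 1) \<noteq> 0"
    using assms(1) center_vec_nonzero_imp_det4 by blast
  ultimately show False using det4_eq_0_if_cols_dependent3 by blast
qed

lemma kernel_eq_span_center_vec:
  assumes "center_vec A \<noteq> 0" and "A *v w = 0"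
  shows "\<exists>g. w = g *s center_vec A"
proof -
  obtain j where j: "det4 (A$1) (A$2) (A$3) (axis j 1) \<noteq> 0"
    using assms(1) center_vec_nonzero_imp_det4 by blast
  then have cj: "center_vec A $ j \<noteq> 0" by (simp add: tdot_center_vec[symmetric] tdot_axis)
  define w' where "w' = w - (w$j / center_vec A $ j) *s center_vec A"
  have "A *v w' = 0"
    using assms(2) by (simp add: w'_def matrix_vector_mult_diff_distrib vector_scalar_commute
        matrix_vector_mult_center_vec)
  have "w' = 0"
  proof (rule det4_nonzero_orthogonal_imp_0[OF j])
    show "tdot (A$1) w' = 0" "tdot (A$2) w' = 0" "tdot (A$3) w' = 0"
      using \<open>A *v w' = 0\<close> by (simp_all flip: matrix_vector_mult_nth)
    show "tdot (axis j 1) w' = 0" using cj by (simp add: w'_def tdot_axis)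
  qed
  then show ?thesis by (intro exI[of _ "w$j / center_vec A $ j"]) (simp add: w'_def)
qed

lemma surj_if_center_vec_nonzero:
  assumes "center_vec A \<noteq> 0"
  shows "\<exists>z. A *v z = y"
proof -
  obtain j where "det4 (A$1) (A$2) (A$3) (axis j 1) \<noteq> 0"
    using assms center_vec_nonzero_imp_det4 by blast
  then obtain z where "tdot (A$1) z = y$1" "tdot (A$2) z = y$2" "tdot (A$3) z = y$3"
    using det4_nonzero_solvable by blast
  then have "A *v z = y" by (simp add: vec_eq_iff forall_3 matrix_vector_mult_nth)
  then show ?thesis by blast
qed

lemma tdot_fundamental:
  "tdot (A *v y) (fundamental A B *v (B *v w)) = det4 (center_vec A) y (center_vec B) w"
proof -
  have mod3: "(1::3) + 1 = 2" "(1::3) + 2 = 3" "(2::3) + 1 = 3" "(2::3) + 2 = 1"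
    "(3::3) + 1 = 1" "(3::3) + 2 = 2" "(4::3) = 1" "(5::3) = 2" "(6::3) = 3"
    by simp_all
  have entries: "fundamental A B $ k $ l = det4 (A$(k+1)) (A$(k+2)) (B$(l+1)) (B$(l+2))" for k l
    by (simp add: fundamental_def det4_def rows4_def)
  show ?thesis
    unfolding tdot_def matrix_vector_mult_def sum_3 sum_4 entries mod3 center_vec_def cross4_def
    by (simp add: det4_expand axis_def sum_4 sum_3 mod3) algebra
qed

lemma cam_line_add_scale: "cam_line A x (y + t *s z) = cam_line A x y + t *s cam_line A x z"
  by (simp add: cam_line_def matrix_vector_right_distrib vector_scalar_commute cross3c_add_right
      cross3c_scale_right)

lemma tdot_cam_line_span:
  "tdot (A *v (a *s u + b *s v)) (cam_line A u v) = 0"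
  by (simp add: cam_line_def matrix_vector_right_distrib vector_scalar_commute tdot_add_left
      tdot_scale_left tdot_cross3c_self)

lemma cam_line_nonzero_imp_lin_indep2:
  assumes "cam_line A u v \<noteq> 0"
  shows "lin_indep2 u v"
  unfolding lin_indep2_def
proof (intro allI impI)
  fix s t assume "s *s u + t *s v = 0"
  then have "A *v (s *s u + t *s v) = 0" by simp
  then have "s *s (A *v u) + t *s (A *v v) = 0"
    by (simp add: matrix_vector_right_distrib vector_scalar_commute)
  then show "s = 0 \<and> t = 0"
    using assms cross3c_eq_0_if_dependent unfolding cam_line_def by blast
qed

lemma center_in_span_if_cam_line_eq_0:
  assumes "cam_line A x y = 0" and "center_vec A \<noteq> 0" and "lin_indep2 x y"
  shows "in_span2 (center_vec A) x y"
proof -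
  obtain s t where st: "(s, t) \<noteq> (0, 0)" "s *s (A *v x) + t *s (A *v y) = 0"
    using dependent_if_cross3c_eq_0 assms(1) unfolding cam_line_def by blast
  then have "A *v (s *s x + t *s y) = 0"
    by (simp add: matrix_vector_right_distrib vector_scalar_commute)
  then obtain g where g: "s *s x + t *s y = g *s center_vec A"
    using kernel_eq_span_center_vec[OF assms(2)] by blast
  have "s *s x + t *s y \<noteq> 0" using assms(3) st(1) unfolding lin_indep2_def by auto
  then have "g \<noteq> 0" using g by auto
  then have "center_vec A = (1 / g) *s (s *s x + t *s y)"
    using g by (simp add: vector_smult_assoc)
  then have "center_vec A = (s / g) *s x + (t / g) *s y"
    by (simp add: vector_add_ldistrib vector_smult_assoc)
  then show ?thesis unfolding in_span2_def by (intro exI)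
qed


section \<open>Polynomial functions, Zariski closure and genericity\<close>

lemma polyfun_diff: "p \<in> polyfun V \<Longrightarrow> q \<in> polyfun V \<Longrightarrow> (\<lambda>z. p z - q z) \<in> polyfun V"
proof -
  assume "p \<in> polyfun V" "q \<in> polyfun V"
  then have "(\<lambda>z. p z + (\<lambda>_. - 1) z * q z) \<in> polyfun V"
    by (intro polyfun.add polyfun.mult polyfun.const)
  then show ?thesis by simp
qed

lemma polyfun_sum:
  "finite S \<Longrightarrow> (\<And>s. s \<in> S \<Longrightarrow> f s \<in> polyfun V) \<Longrightarrow> (\<lambda>z. \<Sum>s\<in>S. f s z) \<in> polyfun V"
proof (induction S rule: finite_induct)
  case empty
  then show ?case using polyfun.const[of 0] by simp
next
  case (insert x F)
  then have "(\<lambda>z. f x z + (\<Sum>s\<in>F. f s z)) \<in> polyfun V" by (intro polyfun.add) auto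
  then show ?case using insert by simp
qed

lemma polyfun_tdot:
  assumes "\<And>k. (\<lambda>z. a z $ k) \<in> polyfun V" and "\<And>k. (\<lambda>z. b z $ k) \<in> polyfun V"
  shows "(\<lambda>z. tdot (a z) (b z)) \<in> polyfun V"
  unfolding tdot_def by (intro polyfun_sum polyfun.mult assms) auto

lemma polyfun_matrix_vector_mult:
  assumes "\<And>r c. (\<lambda>z. M z $ r $ c) \<in> polyfun V" and "\<And>k. (\<lambda>z. a z $ k) \<in> polyfun V"
  shows "(\<lambda>z. (M z *v a z) $ r) \<in> polyfun V"
  unfolding matrix_vector_mult_def
  by (simp only: vec_lambda_beta) (intro polyfun_sum polyfun.mult assms; simp)

lemma polyfun_det4:
  assumes "\<And>k. (\<lambda>z. a z $ k) \<in> polyfun V" "\<And>k. (\<lambda>z. b z $ k) \<in> polyfun V"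
    "\<And>k. (\<lambda>z. c z $ k) \<in> polyfun V" "\<And>k. (\<lambda>z. d z $ k) \<in> polyfun V"
  shows "(\<lambda>z. det4 (a z) (b z) (c z) (d z)) \<in> polyfun V"
  unfolding det4_expand by (intro polyfun.add polyfun_diff polyfun.mult assms)

lemma polyfun_cross4:
  assumes "\<And>k. (\<lambda>z. a z $ k) \<in> polyfun V" "\<And>k. (\<lambda>z. b z $ k) \<in> polyfun V"
    "\<And>k. (\<lambda>z. c z $ k) \<in> polyfun V"
  shows "(\<lambda>z. cross4 (a z) (b z) (c z) $ k) \<in> polyfun V"
  unfolding cross4_def by (simp only: vec_lambda_beta) (intro polyfun_det4 assms polyfun.const)

lemma polyfun_tendsto:
  assumes "p \<in> polyfun V" and "\<And>f. f \<in> V \<Longrightarrow> ((\<lambda>t. f (g t)) \<longlongrightarrow> f x) F"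
  shows "((\<lambda>t. p (g t)) \<longlongrightarrow> p x) F"
  using assms(1) by induction (auto intro: tendsto_add tendsto_mult assms(2))

lemma zclosure_superset: "S \<subseteq> zclosure V S"
  unfolding zclosure_def by blast

lemma zclosure_vanishing:
  "p \<in> polyfun V \<Longrightarrow> (\<And>y. y \<in> S \<Longrightarrow> p y = 0) \<Longrightarrow> x \<in> zclosure V S \<Longrightarrow> p x = 0"
  unfolding zclosure_def by blast

lemma zclosure_if_tendsto:
  assumes "F \<noteq> bot" and "eventually (\<lambda>t. g t \<in> S) F"
    and "\<And>f. f \<in> V \<Longrightarrow> ((\<lambda>t. f (g t)) \<longlongrightarrow> f x) F"
  shows "x \<in> zclosure V S"
  unfolding zclosure_def
proof (intro CollectI ballI impI)
  fix p assume p: "p \<in> polyfun V" and vanish: "\<forall>y\<in>S. p y = 0"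
  have "((\<lambda>t. p (g t)) \<longlongrightarrow> p x) F" by (rule polyfun_tendsto[OF p assms(3)])
  moreover have "eventually (\<lambda>t. p (g t) = 0) F"
    using assms(2) by eventually_elim (use vanish in auto)
  then have "((\<lambda>t. p (g t)) \<longlongrightarrow> 0) F" by (rule tendsto_eventually)
  ultimately show "p x = 0" using tendsto_unique[OF assms(1)] by blast
qed

lemma polyfun_cam_coords_cam_entry: "i < m \<Longrightarrow> (\<lambda>C. C i $ r $ c) \<in> polyfun (cam_coords m)"
  by (rule polyfun.var) (auto simp: cam_coords_def)

lemma polyfun_img_coords_entry: "i < m \<Longrightarrow> (\<lambda>x. x i $ r) \<in> polyfun (img_coords m)"
  by (rule polyfun.var) (auto simp: img_coords_def)

lemma polyfun_center_vec: "i < m \<Longrightarrow> (\<lambda>C. center_vec (C i) $ k) \<in> polyfun (cam_coords m)"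
  unfolding center_vec_def by (intro polyfun_cross4 polyfun_cam_coords_cam_entry)

lemma polyfun_along_affine_path:
  assumes "p \<in> polyfun V" and "\<And>f. f \<in> V \<Longrightarrow> \<exists>\<alpha> \<beta>. \<forall>t. f (g t) = \<alpha> + \<beta> * t"
  shows "\<exists>P. \<forall>t. p (g t) = poly P t"
  using assms(1)
proof induction
  case (const c)
  then show ?case by (intro exI[of _ "[:c:]"]) simp
next
  case (var f)
  then obtain \<alpha> \<beta> where "\<forall>t. f (g t) = \<alpha> + \<beta> * t" using assms(2) by blast
  then show ?case by (intro exI[of _ "[:\<alpha>, \<beta>:]"]) (simp add: algebra_simps)
next
  case (add p q)
  then obtain P Q where "\<forall>t. p (g t) = poly P t" "\<forall>t. q (g t) = poly Q t" by blast
  then show ?case by (intro exI[of _ "P + Q"]) simp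
next
  case (mult p q)
  then obtain P Q where "\<forall>t. p (g t) = poly P t" "\<forall>t. q (g t) = poly Q t" by blast
  then show ?case by (intro exI[of _ "P * Q"]) simp
qed

lemma polyfun_cam_coords_mult_nonzero:
  assumes "p \<in> polyfun (cam_coords m)" "q \<in> polyfun (cam_coords m)"
    and "p a \<noteq> 0" "q b \<noteq> 0"
  shows "\<exists>C. p C * q C \<noteq> 0"
proof -
  define g where "g t = (\<lambda>i. \<chi> r c. a i $ r $ c + t * (b i $ r $ c - a i $ r $ c))" for t
  have g01: "g 0 = a" "g 1 = b" by (auto simp: g_def vec_eq_iff)
  have affine: "\<exists>\<alpha> \<beta>. \<forall>t. f (g t) = \<alpha> + \<beta> * t" if f: "f \<in> cam_coords m" for f
  proof -
    obtain i r c where "f = (\<lambda>C. C i $ r $ c)" using f unfolding cam_coords_def by blast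
    then show ?thesis
      by (intro exI[of _ "a i $ r $ c"] exI[of _ "b i $ r $ c - a i $ r $ c"]) (simp add: g_def)
  qed
  obtain P where P: "\<forall>t. p (g t) = poly P t"
    using polyfun_along_affine_path[where g = g, OF assms(1) affine] by blast
  obtain Q where Q: "\<forall>t. q (g t) = poly Q t"
    using polyfun_along_affine_path[where g = g, OF assms(2) affine] by blast
  have "P \<noteq> 0" using P assms(3) g01(1) by (metis poly_0)
  moreover have "Q \<noteq> 0" using Q assms(4) g01(2) by (metis poly_0)
  ultimately obtain t where "poly (P * Q) t \<noteq> 0"
    using poly_all_0_iff_0[of "P * Q"] by auto
  then show ?thesis using P Q by (intro exI[of _ "g t"]) simp
qed

lemma generic_arr_True: "generic_arr m (\<lambda>_. True)"
proof -
  have "zariski_closed (cam_coords m) {}"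
    unfolding zariski_closed_def by (intro exI[of _ "{\<lambda>_. 1}"]) (auto intro: polyfun.const)
  then show ?thesis unfolding generic_arr_def by blast
qed

lemma generic_arr_nonzero:
  assumes "p \<in> polyfun (cam_coords m)" and "p C\<^sub>0 \<noteq> 0"
  shows "generic_arr m (\<lambda>C. p C \<noteq> 0)"
proof -
  have "zariski_closed (cam_coords m) {C. p C = 0}"
    unfolding zariski_closed_def using assms(1) by (intro exI[of _ "{p}"]) auto
  moreover have "{C. p C = 0} \<noteq> UNIV" using assms(2) by auto
  ultimately show ?thesis unfolding generic_arr_def by blast
qed

lemma generic_arr_mono:
  assumes "generic_arr m P" and "\<And>C. camera_arrangement m C \<Longrightarrow> P C \<Longrightarrow> Q C"
  shows "generic_arr m Q"
  using assms unfolding generic_arr_def by blast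

lemma generic_arr_witness_poly:
  assumes "generic_arr m P"
  obtains p C\<^sub>0 where "p \<in> polyfun (cam_coords m)" "p C\<^sub>0 \<noteq> 0"
    "\<And>C. camera_arrangement m C \<Longrightarrow> p C \<noteq> 0 \<Longrightarrow> P C"
proof -
  obtain Z where Z: "zariski_closed (cam_coords m) Z" "Z \<noteq> UNIV"
    "\<And>C. camera_arrangement m C \<Longrightarrow> C \<notin> Z \<Longrightarrow> P C"
    using assms unfolding generic_arr_def by blast
  then obtain Ps where Ps: "Ps \<subseteq> polyfun (cam_coords m)" "Z = {C. \<forall>p\<in>Ps. p C = 0}"
    unfolding zariski_closed_def by blast
  then obtain p C\<^sub>0 where "p \<in> Ps" "p C\<^sub>0 \<noteq> 0" using Z(2) by blast
  with Ps Z(3) show ?thesis by (intro that) auto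
qed

lemma generic_arr_conj:
  assumes "generic_arr m P" and "generic_arr m Q"
  shows "generic_arr m (\<lambda>C. P C \<and> Q C)"
proof -
  obtain p a where p: "p \<in> polyfun (cam_coords m)" "p a \<noteq> 0"
    and P: "\<And>C. camera_arrangement m C \<Longrightarrow> p C \<noteq> 0 \<Longrightarrow> P C"
    using generic_arr_witness_poly[OF assms(1)] by metis
  obtain q b where q: "q \<in> polyfun (cam_coords m)" "q b \<noteq> 0"
    and Q: "\<And>C. camera_arrangement m C \<Longrightarrow> q C \<noteq> 0 \<Longrightarrow> Q C"
    using generic_arr_witness_poly[OF assms(2)] by metis
  obtain C\<^sub>0 where "p C\<^sub>0 * q C\<^sub>0 \<noteq> 0"
    using polyfun_cam_coords_mult_nonzero[OF p(1) q(1) p(2) q(2)] by blast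
  with p(1) q(1) have "generic_arr m (\<lambda>C. p C * q C \<noteq> 0)"
    by (intro generic_arr_nonzero polyfun.mult)
  then show ?thesis by (rule generic_arr_mono) (simp add: P Q)
qed

lemma generic_arr_ball:
  assumes "finite I" and "\<And>i. i \<in> I \<Longrightarrow> generic_arr m (P i)"
  shows "generic_arr m (\<lambda>C. \<forall>i\<in>I. P i C)"
  using assms
proof (induction I rule: finite_induct)
  case empty
  then show ?case using generic_arr_True by simp
next
  case (insert i I)
  then have "generic_arr m (\<lambda>C. P i C \<and> (\<forall>i\<in>I. P i C))" by (intro generic_arr_conj) auto
  then show ?case by simp
qed

lemma generic_arr_vec_nonzero:
  assumes "\<And>k. (\<lambda>C. f C $ k) \<in> polyfun (cam_coords m)" and "f C\<^sub>0 \<noteq> 0"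
  shows "generic_arr m (\<lambda>C. f C \<noteq> 0)"
proof -
  obtain k where "f C\<^sub>0 $ k \<noteq> 0" using assms(2) by (auto simp: vec_eq_iff)
  with assms(1) have "generic_arr m (\<lambda>C. f C $ k \<noteq> 0)" by (rule generic_arr_nonzero)
  then show ?thesis by (rule generic_arr_mono) (metis zero_index)
qed


section \<open>The multiview variety of a line\<close>

lemma point_image_cone_epipolar:
  assumes "y \<in> point_image_cone m C u v" and "i < m" and "j < m"
  shows "tdot (y i) (fundamental (C i) (C j) *v y j) = 0"
proof -
  obtain Y where Y: "\<forall>k<m. \<exists>c. y k = c *s (C k *v Y)"
    using assms(1) unfolding point_image_cone_def by blast
  obtain ci cj where "y i = ci *s (C i *v Y)" "y j = cj *s (C j *v Y)"
    using Y assms(2,3) by blast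
  then show ?thesis
    by (simp add: vector_scalar_commute tdot_scale_left tdot_scale_right tdot_fundamental
        det4_repeated)
qed

lemma point_image_cone_incident:
  assumes "y \<in> point_image_cone m C u v" and "i < m"
  shows "tdot (y i) (cam_line (C i) u v) = 0"
proof -
  obtain a b where Y: "\<forall>k<m. \<exists>c. y k = c *s (C k *v (a *s u + b *s v))"
    using assms(1) unfolding point_image_cone_def in_span2_def by blast
  then obtain c where "y i = c *s (C i *v (a *s u + b *s v))" using assms(2) by blast
  then show ?thesis by (simp add: tdot_scale_left tdot_cam_line_span)
qed

lemma proportional_if_coplanar_with_skew_line:
  fixes \<alpha> \<beta> \<alpha>' \<beta>' :: complex
  assumes "det4 c u c' v \<noteq> 0" and "(\<alpha>, \<beta>) \<noteq> (0, 0)"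
    and "det4 c (\<alpha> *s u + \<beta> *s v) c' (\<alpha>' *s u + \<beta>' *s v) = 0"
  shows "\<exists>g. \<alpha>' *s u + \<beta>' *s v = g *s (\<alpha> *s u + \<beta> *s v)"
proof -
  have "(\<alpha> * \<beta>' - \<beta> * \<alpha>') * det4 c u c' v = 0"
    using assms(3) by (simp add: det4_expand; algebra)
  with assms(1) have minor: "\<alpha> * \<beta>' = \<beta> * \<alpha>'" by simp
  show ?thesis
  proof (cases "\<alpha> = 0")
    case False
    with minor have "\<alpha>' *s u + \<beta>' *s v = (\<alpha>' / \<alpha>) *s (\<alpha> *s u + \<beta> *s v)"
      by (simp add: vec_eq_iff field_simps)
    then show ?thesis by blast
  next
    case True
    with assms(2) minor have "\<beta> \<noteq> 0" "\<alpha>' = 0" by auto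
    with True have "\<alpha>' *s u + \<beta>' *s v = (\<beta>' / \<beta>) *s (\<alpha> *s u + \<beta> *s v)"
      by (simp add: vec_eq_iff)
    then show ?thesis by blast
  qed
qed

lemma image_point_on_image_line:
  assumes "cam_line A u v \<noteq> 0" and "tdot x (cam_line A u v) = 0"
  obtains a b where "x = A *v (a *s u + b *s v)"
proof -
  obtain a b where "x = a *s (A *v u) + b *s (A *v v)"
    using orthogonal_cross3c_imp_in_span assms unfolding cam_line_def by blast
  then have "x = A *v (a *s u + b *s v)"
    by (simp add: matrix_vector_right_distrib vector_scalar_commute)
  then show ?thesis by (rule that)
qed

lemma point_image_cone_if_constraints:
  assumes m: "0 < m" and x: "\<forall>i<m. x i \<noteq> 0"
    and L: "\<forall>i<m. cam_line (C i) u v \<noteq> 0"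
    and skew: "\<forall>j. 1 \<le> j \<and> j < m \<longrightarrow> det4 (center_vec (C 0)) u (center_vec (C j)) v \<noteq> 0"
    and epipolar: "\<forall>j. 1 \<le> j \<and> j < m \<longrightarrow> tdot (x 0) (fundamental (C 0) (C j) *v x j) = 0"
    and incident: "\<forall>i<m. tdot (x i) (cam_line (C i) u v) = 0"
  shows "x \<in> point_image_cone m C u v"
proof -
  obtain \<alpha> \<beta> where x0: "x 0 = C 0 *v (\<alpha> *s u + \<beta> *s v)"
    using image_point_on_image_line L incident m by blast
  define Y where "Y = \<alpha> *s u + \<beta> *s v"
  have "Y \<noteq> 0" using x0 x m by (auto simp: Y_def)
  then have \<alpha>\<beta>: "(\<alpha>, \<beta>) \<noteq> (0, 0)" by (auto simp: Y_def)
  have CY: "C i *v Y \<noteq> 0" if i: "i < m" for i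
  proof
    assume "C i *v Y = 0"
    then have "\<alpha> *s (C i *v u) + \<beta> *s (C i *v v) = 0"
      by (simp add: Y_def matrix_vector_right_distrib vector_scalar_commute)
    then show False using L i \<alpha>\<beta> cross3c_eq_0_if_dependent unfolding cam_line_def by blast
  qed
  have "\<exists>c. c \<noteq> 0 \<and> x i = c *s (C i *v Y)" if i: "i < m" for i
  proof (cases "i = 0")
    case True
    then show ?thesis using x0 by (intro exI[of _ 1]) (simp add: Y_def)
  next
    case False
    obtain \<alpha>' \<beta>' where xi: "x i = C i *v (\<alpha>' *s u + \<beta>' *s v)"
      using image_point_on_image_line L incident i by blast
    have "tdot (x 0) (fundamental (C 0) (C i) *v x i) = 0" using epipolar i False by simp
    then have "det4 (center_vec (C 0)) Y (center_vec (C i)) (\<alpha>' *s u + \<beta>' *s v) = 0"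
      by (simp add: x0 xi Y_def tdot_fundamental)
    moreover have "det4 (center_vec (C 0)) u (center_vec (C i)) v \<noteq> 0" using skew i False by simp
    ultimately obtain c where "\<alpha>' *s u + \<beta>' *s v = c *s Y"
      using proportional_if_coplanar_with_skew_line[OF _ \<alpha>\<beta>] unfolding Y_def by blast
    then have "x i = c *s (C i *v Y)" by (simp add: xi vector_scalar_commute)
    moreover from this have "c \<noteq> 0" using x i by auto
    ultimately show ?thesis by blast
  qed
  with CY \<open>Y \<noteq> 0\<close> show ?thesis
    unfolding point_image_cone_def in_span2_def Y_def by blast
qed

lemma mem_M_L_iff:
  assumes m: "m \<ge> 2" and x: "\<forall>i<m. x i \<noteq> 0"
    and L: "\<forall>i<m. cam_line (C i) u v \<noteq> 0"
    and skew: "\<forall>j. 1 \<le> j \<and> j < m \<longrightarrow> det4 (center_vec (C 0)) u (center_vec (C j)) v \<noteq> 0"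
  shows "x \<in> M_L m C u v \<longleftrightarrow>
    (\<forall>j. 1 \<le> j \<and> j < m \<longrightarrow> tdot (x 0) (fundamental (C 0) (C j) *v x j) = 0) \<and>
    (\<forall>i<m. tdot (x i) (cam_line (C i) u v) = 0)"
proof
  assume "x \<in> M_L m C u v"
  then have closure: "x \<in> zclosure (img_coords m) (point_image_cone m C u v)"
    by (simp add: M_L_def multiproj_closure_def)
  have "tdot (x 0) (fundamental (C 0) (C j) *v x j) = 0" if j: "1 \<le> j" "j < m" for j
  proof (rule zclosure_vanishing[OF _ _ closure])
    show "(\<lambda>y. tdot (y 0) (fundamental (C 0) (C j) *v y j)) \<in> polyfun (img_coords m)"
      using j by (intro polyfun_tdot polyfun_matrix_vector_mult polyfun_img_coords_entry
          polyfun.const) auto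
  qed (use point_image_cone_epipolar j in auto)
  moreover have "tdot (x i) (cam_line (C i) u v) = 0" if i: "i < m" for i
  proof (rule zclosure_vanishing[OF _ _ closure])
    show "(\<lambda>y. tdot (y i) (cam_line (C i) u v)) \<in> polyfun (img_coords m)"
      using i by (intro polyfun_tdot polyfun_img_coords_entry polyfun.const)
  qed (use point_image_cone_incident i in auto)
  ultimately show "(\<forall>j. 1 \<le> j \<and> j < m \<longrightarrow> tdot (x 0) (fundamental (C 0) (C j) *v x j) = 0) \<and>
    (\<forall>i<m. tdot (x i) (cam_line (C i) u v) = 0)" by blast
next
  assume "(\<forall>j. 1 \<le> j \<and> j < m \<longrightarrow> tdot (x 0) (fundamental (C 0) (C j) *v x j) = 0) \<and>
    (\<forall>i<m. tdot (x i) (cam_line (C i) u v) = 0)"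
  then have "x \<in> point_image_cone m C u v"
    using point_image_cone_if_constraints[of m x C u v] m x L skew by auto
  then show "x \<in> M_L m C u v"
    using x zclosure_superset[THEN subsetD] by (simp add: M_L_def multiproj_closure_def)
qed


section \<open>The line multiview variety of a point\<close>

lemma line_image_cone_orthogonal:
  assumes "y \<in> line_image_cone m C X"
  shows "\<exists>u' v'. lin_indep2 u' v' \<and>
    (\<forall>k<m. tdot (transpose (C k) *v y k) u' = 0 \<and> tdot (transpose (C k) *v y k) v' = 0 \<and>
      tdot (y k) (C k *v X) = 0)"
proof -
  obtain u' v' where uv: "lin_indep2 u' v'" "in_span2 X u' v'"
    and y: "\<forall>k<m. \<exists>c. y k = c *s cam_line (C k) u' v'"
    using assms unfolding line_image_cone_def by blast
  obtain a b where X: "X = a *s u' + b *s v'" using uv(2) unfolding in_span2_def by blast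
  have "tdot (transpose (C k) *v y k) u' = 0 \<and> tdot (transpose (C k) *v y k) v' = 0 \<and>
      tdot (y k) (C k *v X) = 0" if k: "k < m" for k
  proof -
    obtain c where "y k = c *s cam_line (C k) u' v'" using y k by blast
    then show ?thesis
      unfolding tdot_matrix_vector_mult[symmetric] X cam_line_def
      by (simp add: tdot_scale_left tdot_add_right tdot_scale_right tdot_cross3c_self
          matrix_vector_right_distrib vector_scalar_commute)
  qed
  with uv(1) show ?thesis by blast
qed

lemma L_X_cols_dependent3:
  assumes l: "l \<in> zclosure (img_coords m) (line_image_cone m C X)"
    and "a < m" "b < m" "c < m"
  shows "cols_dependent3 (transpose (C a) *v l a) (transpose (C b) *v l b) (transpose (C c) *v l c)"
proof (rule ccontr)
  let ?P = "\<lambda>y k. transpose (C k) *v y k"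
  assume "\<not> ?thesis"
  then obtain d where d: "det4 (?P l a) (?P l b) (?P l c) d \<noteq> 0"
    using exists_det4_nonzero_if_not_cols_dependent3 by blast
  have "det4 (?P l a) (?P l b) (?P l c) d = 0"
  proof (rule zclosure_vanishing[OF _ _ l])
    show "(\<lambda>y. det4 (?P y a) (?P y b) (?P y c) d) \<in> polyfun (img_coords m)"
      using assms(2-4)
      by (intro polyfun_det4 polyfun_matrix_vector_mult polyfun_img_coords_entry polyfun.const)
  next
    fix y assume "y \<in> line_image_cone m C X"
    then obtain u' v' where "lin_indep2 u' v'"
      and "\<forall>k<m. tdot (?P y k) u' = 0 \<and> tdot (?P y k) v' = 0 \<and> tdot (y k) (C k *v X) = 0"
      using line_image_cone_orthogonal by blast
    then have "cols_dependent3 (?P y a) (?P y b) (?P y c)"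
      using assms(2-4) by (intro cols_dependent3_if_orthogonal_pair) auto
    then show "det4 (?P y a) (?P y b) (?P y c) d = 0" by (rule det4_eq_0_if_cols_dependent3)
  qed
  with d show False by simp
qed

lemma L_X_incident:
  assumes l: "l \<in> zclosure (img_coords m) (line_image_cone m C X)" and i: "i < m"
  shows "tdot (l i) (C i *v X) = 0"
proof (rule zclosure_vanishing[OF _ _ l])
  show "(\<lambda>y. tdot (y i) (C i *v X)) \<in> polyfun (img_coords m)"
    using i by (intro polyfun_tdot polyfun_img_coords_entry polyfun.const)
qed (use line_image_cone_orthogonal i in blast)

lemma cross4_orthogonal_lin_indep2:
  assumes "\<not> cols_dependent3 a b e" and "tdot e x \<noteq> 0"
  shows "tdot a (cross4 a b e) = 0" "tdot b (cross4 a b e) = 0" "lin_indep2 x (cross4 a b e)"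
proof -
  have dot: "tdot z (cross4 a b e) = det4 a b e z" for z by (metis tdot_commute tdot_cross4)
  show "tdot a (cross4 a b e) = 0" "tdot b (cross4 a b e) = 0"
    by (simp_all add: dot det4_repeated)
  obtain d where "det4 a b e d \<noteq> 0"
    using assms(1) exists_det4_nonzero_if_not_cols_dependent3 by blast
  then have Y: "cross4 a b e \<noteq> 0" using dot[of d] by (auto simp: tdot_commute)
  show "lin_indep2 x (cross4 a b e)" unfolding lin_indep2_def
  proof (intro allI impI)
    fix s t assume "s *s x + t *s cross4 a b e = 0"
    then have "tdot e (s *s x + t *s cross4 a b e) = 0" by simp
    then have "s = 0" using assms(2) by (simp add: tdot_add_right tdot_scale_right dot det4_repeated)
    with \<open>s *s x + t *s cross4 a b e = 0\<close> Y show "s = 0 \<and> t = 0" by simp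
  qed
qed

lemma exists_third_not_cols_dependent3:
  assumes "lin_indep2 a e"
  shows "\<exists>v. \<not> cols_dependent3 a v e"
proof -
  have "card {a, e} \<le> 2" by (auto simp: card_insert_if)
  then obtain v where v: "v \<notin> vec.span {a, e}"
    using exists_vector_not_in_span[of "{a, e}"] by auto
  have "\<not> cols_dependent3 a v e"
  proof
    assume "cols_dependent3 a v e"
    then obtain s t w where stw: "(s, t, w) \<noteq> (0, 0, 0)" "s *s a + t *s v + w *s e = 0"
      unfolding cols_dependent3_def by blast
    show False
    proof (cases "t = 0")
      case True
      with stw assms show False unfolding lin_indep2_def by auto
    next
      case False
      have "- (s *s a + w *s e) = t *s v"
        using stw(2) by (simp add: algebra_simps neg_eq_iff_add_eq_0)
      then have "(1 / t) *s (t *s v) = (1 / t) *s (- (s *s a + w *s e))" by simp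
      then have "v = (- 1 / t) *s (s *s a + w *s e)" using False by (simp add: vector_smult_assoc)
      moreover have "(- 1 / t) *s (s *s a + w *s e) \<in> vec.span {a, e}"
        by (intro vec.span_scale vec.span_add) (auto intro: vec.span_base)
      ultimately show False using v by simp
    qed
  qed
  then show ?thesis by blast
qed

lemma exists_orthogonal_lin_indep2:
  assumes x: "x \<noteq> 0" and a: "a \<noteq> 0" "tdot a x = 0" and b: "tdot b x = 0"
  shows "\<exists>y. tdot a y = 0 \<and> tdot b y = 0 \<and> lin_indep2 x y"
proof -
  obtain k where k: "tdot (axis k 1) x \<noteq> 0" using exists_axis_tdot_nonzero[OF x] by blast
  let ?e = "axis k 1 :: complex^4"
  have e: "w = 0" if "tdot (s *s a + t *s b + w *s ?e) x = 0" for s t w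
    using that a(2) b k by (simp add: tdot_add_left tdot_scale_left)
  show ?thesis
  proof (cases "lin_indep2 a b")
    case True
    have "\<not> cols_dependent3 a b ?e"
    proof
      assume "cols_dependent3 a b ?e"
      then obtain s t w where stw: "(s, t, w) \<noteq> (0, 0, 0)" "s *s a + t *s b + w *s ?e = 0"
        unfolding cols_dependent3_def by blast
      then have "w = 0" using e[of s t w] by simp
      with stw True show False unfolding lin_indep2_def by auto
    qed
    then show ?thesis using cross4_orthogonal_lin_indep2[OF _ k] by blast
  next
    case False
    have "lin_indep2 a ?e" unfolding lin_indep2_def
    proof (intro allI impI)
      fix s w assume sw: "s *s a + w *s ?e = 0"
      then have "w = 0" using e[of s 0 w] by simp
      with sw a(1) show "s = 0 \<and> w = 0" by simp
    qed
    then obtain v where "\<not> cols_dependent3 a v ?e" using exists_third_not_cols_dependent3 by blast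
    then obtain y where "tdot a y = 0" "lin_indep2 x y"
      using cross4_orthogonal_lin_indep2[OF _ k] by blast
    moreover from this(1) have "tdot b y = 0"
      using False a(1) tdot_eq_0_if_not_lin_indep2 by blast
    ultimately show ?thesis by blast
  qed
qed


lemma exists_common_orthogonal:
  fixes P :: "nat \<Rightarrow> complex^4"
  assumes m: "m \<ge> 2" and x: "x \<noteq> 0"
    and P: "\<forall>i<m. P i \<noteq> 0" "\<forall>i<m. tdot (P i) x = 0"
    and dep: "\<forall>i. 2 \<le> i \<and> i < m \<longrightarrow>
      cols_dependent3 (P 0) (P 1) (P i) \<and> cols_dependent3 (P 0) (P 2) (P i)"
    and rank2: "3 \<le> m \<longrightarrow> lin_indep2 (P 0) (P 1) \<or> lin_indep2 (P 0) (P 2)"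
  shows "\<exists>y. lin_indep2 x y \<and> (\<forall>i<m. tdot (P i) y = 0)"
proof (cases "lin_indep2 (P 0) (P 1) \<or> m = 2")
  case True
  from m P have "P 0 \<noteq> 0" "tdot (P 0) x = 0" "tdot (P 1) x = 0" by auto
  then obtain y where y: "tdot (P 0) y = 0" "tdot (P 1) y = 0" "lin_indep2 x y"
    using exists_orthogonal_lin_indep2[OF x] by blast
  have "tdot (P i) y = 0" if i: "i < m" for i
  proof -
    consider "i = 0" | "i = 1" | "2 \<le> i" by linarith
    then show ?thesis
    proof cases
      case 3
      with i True have "lin_indep2 (P 0) (P 1)" by auto
      with 3 i dep y(1,2) show ?thesis using tdot_eq_0_if_cols_dependent3 by blast
    qed (use y in auto)
  qed
  with y(3) show ?thesis by blast
next
  case False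
  with m rank2 have m3: "3 \<le> m" and P01: "\<not> lin_indep2 (P 0) (P 1)" and P02: "lin_indep2 (P 0) (P 2)"
    by auto
  from m3 P have "P 0 \<noteq> 0" "tdot (P 0) x = 0" "tdot (P 2) x = 0" by auto
  then obtain y where y: "tdot (P 0) y = 0" "tdot (P 2) y = 0" "lin_indep2 x y"
    using exists_orthogonal_lin_indep2[OF x] by blast
  have "tdot (P i) y = 0" if i: "i < m" for i
  proof -
    consider "i = 0" | "i = 1" | "2 \<le> i" by linarith
    then show ?thesis
    proof cases
      case 2
      with P01 P m3 y(1) show ?thesis using tdot_eq_0_if_not_lin_indep2 by auto
    next
      case 3
      with i dep P02 y(1,2) show ?thesis using tdot_eq_0_if_cols_dependent3 by blast
    qed (use y in auto)
  qed
  with y(3) show ?thesis by blast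
qed


lemma cols_dependent3_zero_middle: "cols_dependent3 x 0 q"
  unfolding cols_dependent3_def by (intro exI[of _ 0] exI[of _ 1]) auto

lemma cols_dependent3_multiple: "x = g *s p \<Longrightarrow> cols_dependent3 x p q"
  unfolding cols_dependent3_def by (intro exI[of _ 1] exI[of _ "- g"] exI[of _ 0]) auto

locale noncollinear_centers =
  fixes m :: nat and C :: "nat \<Rightarrow> complex^4^3" and X :: "complex^4"
  assumes two_views: "m \<ge> 2"
    and noncollinear:
      "\<And>i j. i < m \<Longrightarrow> j < m \<Longrightarrow> i \<noteq> j \<Longrightarrow> \<not> cols_dependent3 X (center_vec (C i)) (center_vec (C j))"
begin

lemma center_vec_nonzero: "i < m \<Longrightarrow> center_vec (C i) \<noteq> 0"
  and image_nonzero: "i < m \<Longrightarrow> C i *v X \<noteq> 0"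
proof -
  assume i: "i < m"
  define j where "j = (if i = 0 then 1 else 0 :: nat)"
  have j: "j < m" "i \<noteq> j" using two_views by (auto simp: j_def)
  show c: "center_vec (C i) \<noteq> 0"
  proof
    assume "center_vec (C i) = 0"
    then have "cols_dependent3 X (center_vec (C i)) (center_vec (C j))"
      by (simp add: cols_dependent3_zero_middle)
    with noncollinear[OF i j] show False by blast
  qed
  show "C i *v X \<noteq> 0"
  proof
    assume "C i *v X = 0"
    then obtain g where "X = g *s center_vec (C i)" using kernel_eq_span_center_vec[OF c] by blast
    then show False using noncollinear[OF i j] cols_dependent3_multiple by blast
  qed
qed

lemma at_most_one_center_on_line:
  assumes "lin_indep2 X Y" and "i < m" "k < m" "i \<noteq> k"
    and "cam_line (C i) X Y = 0" and "cam_line (C k) X Y = 0"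
  shows False
proof -
  have "in_span2 (center_vec (C i)) X Y" "in_span2 (center_vec (C k)) X Y"
    using assms center_in_span_if_cam_line_eq_0 center_vec_nonzero by blast+
  then have "cols_dependent3 X (center_vec (C i)) (center_vec (C k))"
    by (rule cols_dependent3_if_in_span2)
  with noncollinear assms(2-4) show False by blast
qed

end

lemma eventually_nonzero_affine:
  fixes n w :: "complex^'n"
  assumes "n \<noteq> 0"
  shows "eventually (\<lambda>t. n + t *s w \<noteq> 0) (at 0)"
proof -
  obtain r where r: "n $ r \<noteq> 0" using assms by (auto simp: vec_eq_iff)
  have "((\<lambda>t. n $ r + t * w $ r) \<longlongrightarrow> n $ r + 0 * w $ r) (at 0)" by (intro tendsto_intros)
  then have "eventually (\<lambda>t. n $ r + t * w $ r \<noteq> 0) (at 0)"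
    using r by (simp add: tendsto_imp_eventually_ne)
  then show ?thesis by eventually_elim (auto simp: vec_eq_iff)
qed

lemma zclosure_img_coords_if_tendsto:
  assumes "F \<noteq> bot" and "eventually (\<lambda>t. g t \<in> S) F"
    and "\<And>i r. i < m \<Longrightarrow> ((\<lambda>t. g t i $ r) \<longlongrightarrow> x i $ r) F"
  shows "x \<in> zclosure (img_coords m) S"
proof (rule zclosure_if_tendsto[OF assms(1,2)])
  fix f assume "f \<in> img_coords m"
  then obtain i r where "f = (\<lambda>x. x i $ r)" "i < m" unfolding img_coords_def by blast
  with assms(3) show "((\<lambda>t. f (g t)) \<longlongrightarrow> f x) F" by simp
qed

lemma line_image_cone_memI:
  assumes "0 < m"
    and "\<forall>i<m. cam_line (C i) X Y \<noteq> 0 \<and> (\<exists>c. c \<noteq> 0 \<and> l i = c *s cam_line (C i) X Y)"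
  shows "l \<in> line_image_cone m C X"
proof -
  have "lin_indep2 X Y" using assms cam_line_nonzero_imp_lin_indep2 by blast
  moreover have "in_span2 X X Y" unfolding in_span2_def by (intro exI[of _ 1] exI[of _ 0]) simp
  ultimately show ?thesis using assms(2) unfolding line_image_cone_def by blast
qed

lemma exists_point_imaged_onto_line:
  assumes "center_vec A \<noteq> 0" and "A *v X \<noteq> 0" and "tdot l (A *v X) = 0"
  obtains Z \<gamma> where "\<gamma> \<noteq> 0" "cam_line A X Z = \<gamma> *s l"
proof -
  obtain j where j: "(A *v X) $ j \<noteq> 0" using assms(2) by (auto simp: vec_eq_iff)
  obtain Z where Z: "A *v Z = cross3c l (axis j 1)"
    using surj_if_center_vec_nonzero[OF assms(1)] by blast
  have "cam_line A X Z = (A *v X) $ j *s l"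
    using assms(3) by (simp add: cam_line_def Z cross3c_cross3c tdot_axis tdot_commute)
  with j show ?thesis by (rule that)
qed

text \<open>If the line \<open>XY\<close> meets the center of the \<open>k\<close>-th camera, it has no image there. Turning it
  about \<open>X\<close> towards a point \<open>Z\<close> whose line \<open>XZ\<close> is imaged onto \<open>l\<^sub>k\<close> gives lines whose image
  tuples converge to \<open>l\<close>.\<close>

lemma L_X_closure_one_degenerate_view:
  assumes k: "k < m" and ck: "center_vec (C k) \<noteq> 0" and Xk: "C k *v X \<noteq> 0"
    and lk: "l k \<noteq> 0" "tdot (l k) (C k *v X) = 0"
    and degenerate: "cam_line (C k) X Y = 0"
    and others: "\<forall>i\<in>{..<m} - {k}. cam_line (C i) X Y \<noteq> 0 \<and>
      (\<exists>c. c \<noteq> 0 \<and> l i = c *s cam_line (C i) X Y)"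
  shows "l \<in> zclosure (img_coords m) (line_image_cone m C X)"
proof -
  obtain Z \<gamma> where \<gamma>: "\<gamma> \<noteq> 0" and "cam_line (C k) X Z = \<gamma> *s l k"
    using exists_point_imaged_onto_line[OF ck Xk lk(2)] .
  then have line_k: "cam_line (C k) X (Y + t *s Z) = (t * \<gamma>) *s l k" for t
    by (simp add: cam_line_add_scale degenerate vector_smult_assoc)
  have "\<forall>i\<in>{..<m} - {k}. \<exists>c. cam_line (C i) X Y \<noteq> 0 \<and> c \<noteq> 0 \<and>
      l i = c *s cam_line (C i) X Y"
    using others by blast
  then obtain c where c: "\<forall>i\<in>{..<m} - {k}. cam_line (C i) X Y \<noteq> 0 \<and> c i \<noteq> 0 \<and>
      l i = c i *s cam_line (C i) X Y"
    by (rule bchoice[THEN exE])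
  define path where
    "path t = (\<lambda>i. if i = k then l k else c i *s cam_line (C i) X (Y + t *s Z))" for t
  have "eventually (\<lambda>t::complex. t \<noteq> 0) (at 0)" by (simp add: eventually_at_filter)
  moreover have "eventually (\<lambda>t. \<forall>i\<in>{..<m} - {k}. cam_line (C i) X (Y + t *s Z) \<noteq> 0) (at 0)"
    unfolding cam_line_add_scale using c
    by (intro eventually_ball_finite ballI eventually_nonzero_affine) auto
  ultimately have "eventually (\<lambda>t. path t \<in> line_image_cone m C X) (at 0)"
  proof eventually_elim
    case (elim t)
    with \<gamma> have t\<gamma>: "t * \<gamma> \<noteq> 0" by simp
    show ?case
    proof (rule line_image_cone_memI, use k in simp, intro allI impI)
      fix i assume "i < m"
      show "cam_line (C i) X (Y + t *s Z) \<noteq> 0 \<and>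
          (\<exists>c. c \<noteq> 0 \<and> path t i = c *s cam_line (C i) X (Y + t *s Z))"
      proof (cases "i = k")
        case True
        have "path t k = (1 / (t * \<gamma>)) *s cam_line (C k) X (Y + t *s Z)"
          using t\<gamma> by (simp add: path_def line_k vector_smult_assoc)
        moreover have "cam_line (C k) X (Y + t *s Z) \<noteq> 0" using t\<gamma> lk(1) by (simp add: line_k)
        ultimately show ?thesis using True t\<gamma> by auto
      qed (use elim c \<open>i < m\<close> in \<open>auto simp: path_def\<close>)
    qed
  qed
  moreover have "((\<lambda>t. path t i $ r) \<longlongrightarrow> l i $ r) (at 0)" if "i < m" for i r
  proof (cases "i = k")
    case False
    have "((\<lambda>t. c i * (cam_line (C i) X Y $ r + t * cam_line (C i) X Z $ r)) \<longlongrightarrow>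
        c i * (cam_line (C i) X Y $ r + 0 * cam_line (C i) X Z $ r)) (at 0)"
      by (intro tendsto_intros)
    with False c that show ?thesis
      by (simp add: path_def cam_line_add_scale algebra_simps)
  qed (simp add: path_def)
  ultimately show ?thesis by (rule zclosure_img_coords_if_tendsto[OF at_neq_bot])
qed

lemma (in noncollinear_centers) L_X_closure_if_common_line:
  assumes l: "\<forall>i<m. l i \<noteq> 0" and XY: "lin_indep2 X Y"
    and incident: "\<forall>i<m. tdot (l i) (C i *v X) = 0 \<and> tdot (l i) (C i *v Y) = 0"
  shows "l \<in> zclosure (img_coords m) (line_image_cone m C X)"
proof -
  have parallel: "\<exists>c. c \<noteq> 0 \<and> l i = c *s cam_line (C i) X Y"
    if i: "i < m" and nz: "cam_line (C i) X Y \<noteq> 0" for i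
  proof -
    from incident i have "tdot (l i) (C i *v X) = 0" "tdot (l i) (C i *v Y) = 0" by auto
    then obtain c where "l i = c *s cam_line (C i) X Y"
      using orthogonal_both_imp_parallel_cross3c nz unfolding cam_line_def by blast
    with l i show ?thesis by auto
  qed
  show ?thesis
  proof (cases "\<forall>i<m. cam_line (C i) X Y \<noteq> 0")
    case True
    with two_views parallel have "l \<in> line_image_cone m C X"
      by (intro line_image_cone_memI) auto
    then show ?thesis by (rule zclosure_superset[THEN subsetD])
  next
    case False
    then obtain k where k: "k < m" "cam_line (C k) X Y = 0" by blast
    have "cam_line (C i) X Y \<noteq> 0" if "i \<in> {..<m} - {k}" for i
      using at_most_one_center_on_line[OF XY _ k(1) _ _ k(2)] that by auto
    with parallel have others: "\<forall>i\<in>{..<m} - {k}. cam_line (C i) X Y \<noteq> 0 \<and>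
        (\<exists>c. c \<noteq> 0 \<and> l i = c *s cam_line (C i) X Y)"
      by blast
    from l incident k(1) have "l k \<noteq> 0" "tdot (l k) (C k *v X) = 0" by auto
    from L_X_closure_one_degenerate_view[OF k(1) center_vec_nonzero[OF k(1)] image_nonzero[OF k(1)]
        this k(2) others]
    show ?thesis .
  qed
qed


context noncollinear_centers
begin

text \<open>If the first three back-projected planes \<open>C\<^sub>i\<^sup>T l\<^sub>i\<close> coincided, that plane would contain
  \<open>X\<close> and the first three centers, which the hypothesis \<open>plane\<close> excludes.\<close>

lemma exists_common_line_of_back_projections:
  assumes X: "X \<noteq> 0"
    and plane: "3 \<le> m \<longrightarrow> det4 (center_vec (C 0)) (center_vec (C 1)) (center_vec (C 2)) X \<noteq> 0"
    and l: "\<forall>i<m. l i \<noteq> 0"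
    and dep: "\<forall>i. 2 \<le> i \<and> i < m \<longrightarrow>
      cols_dependent3 (transpose (C 0) *v l 0) (transpose (C 1) *v l 1) (transpose (C i) *v l i) \<and>
      cols_dependent3 (transpose (C 0) *v l 0) (transpose (C 2) *v l 2) (transpose (C i) *v l i)"
    and incident: "\<forall>i<m. tdot (l i) (C i *v X) = 0"
  shows "\<exists>Y. lin_indep2 X Y \<and> (\<forall>i<m. tdot (l i) (C i *v Y) = 0)"
proof -
  define P where "P i = transpose (C i) *v l i" for i
  have dot_P: "tdot (l i) (C i *v Y) = tdot (P i) Y" for i Y
    by (simp only: P_def tdot_matrix_vector_mult)
  have P_nonzero: "P i \<noteq> 0" if i: "i < m" for i
    using transpose_mult_eq_0_imp[OF center_vec_nonzero[OF i]] l i unfolding P_def by blast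
  have P_X: "tdot (P i) X = 0" if "i < m" for i
    using incident that by (simp flip: dot_P)
  have P_center: "tdot (P i) (center_vec (C i)) = 0" for i
    by (simp flip: dot_P add: matrix_vector_mult_center_vec)
  have "lin_indep2 (P 0) (P 1) \<or> lin_indep2 (P 0) (P 2)" if m3: "3 \<le> m"
  proof (rule ccontr)
    assume "\<not> ?thesis"
    then have "\<not> lin_indep2 (P 1) (P 0)" "\<not> lin_indep2 (P 2) (P 0)"
      by (auto simp: lin_indep2_commute)
    with m3 have "tdot (P 0) (center_vec (C 1)) = 0" "tdot (P 0) (center_vec (C 2)) = 0"
      using tdot_eq_0_if_not_lin_indep2 P_nonzero P_center by simp_all
    moreover have "tdot (P 0) (center_vec (C 0)) = 0" "tdot (P 0) X = 0"
      using P_center P_X m3 by simp_all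
    ultimately have "P 0 = 0"
      using det4_nonzero_orthogonal_imp_0 plane m3 by (simp add: tdot_commute)
    with m3 P_nonzero show False by simp
  qed
  moreover have "\<forall>i. 2 \<le> i \<and> i < m \<longrightarrow>
      cols_dependent3 (P 0) (P 1) (P i) \<and> cols_dependent3 (P 0) (P 2) (P i)"
    using dep by (simp only: P_def)
  ultimately obtain Y where "lin_indep2 X Y" "\<forall>i<m. tdot (P i) Y = 0"
    using exists_common_orthogonal[OF two_views X] P_nonzero P_X by blast
  then show ?thesis by (auto simp: dot_P)
qed

lemma mem_L_X_iff:
  assumes X: "X \<noteq> 0"
    and plane: "3 \<le> m \<longrightarrow> det4 (center_vec (C 0)) (center_vec (C 1)) (center_vec (C 2)) X \<noteq> 0"
    and l: "\<forall>i<m. l i \<noteq> 0"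
  shows "l \<in> L_X m C X \<longleftrightarrow>
    (\<forall>i. 2 \<le> i \<and> i < m \<longrightarrow>
      cols_dependent3 (transpose (C 0) *v l 0) (transpose (C 1) *v l 1) (transpose (C i) *v l i) \<and>
      cols_dependent3 (transpose (C 0) *v l 0) (transpose (C 2) *v l 2) (transpose (C i) *v l i)) \<and>
    (\<forall>i<m. tdot (l i) (C i *v X) = 0)"
proof
  assume "l \<in> L_X m C X"
  then have closure: "l \<in> zclosure (img_coords m) (line_image_cone m C X)"
    by (simp add: L_X_def multiproj_closure_def)
  show "(\<forall>i. 2 \<le> i \<and> i < m \<longrightarrow>
      cols_dependent3 (transpose (C 0) *v l 0) (transpose (C 1) *v l 1) (transpose (C i) *v l i) \<and>
      cols_dependent3 (transpose (C 0) *v l 0) (transpose (C 2) *v l 2) (transpose (C i) *v l i)) \<and>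
    (\<forall>i<m. tdot (l i) (C i *v X) = 0)"
    using L_X_cols_dependent3[OF closure] L_X_incident[OF closure] by simp
next
  assume conditions: "(\<forall>i. 2 \<le> i \<and> i < m \<longrightarrow>
      cols_dependent3 (transpose (C 0) *v l 0) (transpose (C 1) *v l 1) (transpose (C i) *v l i) \<and>
      cols_dependent3 (transpose (C 0) *v l 0) (transpose (C 2) *v l 2) (transpose (C i) *v l i)) \<and>
    (\<forall>i<m. tdot (l i) (C i *v X) = 0)"
  then obtain Y where "lin_indep2 X Y" "\<forall>i<m. tdot (l i) (C i *v Y) = 0"
    using exists_common_line_of_back_projections[OF X plane l] by blast
  with conditions l have "l \<in> zclosure (img_coords m) (line_image_cone m C X)"
    by (intro L_X_closure_if_common_line) auto
  with l show "l \<in> L_X m C X" by (simp add: L_X_def multiproj_closure_def)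
qed

end


section \<open>Genericity of the hypotheses\<close>

lemma polyfun_cam_line: "i < m \<Longrightarrow> (\<lambda>C. cam_line (C i) u v $ k) \<in> polyfun (cam_coords m)"
  unfolding cam_line_def cross3c_def
  by (simp only: vec_lambda_beta)
    (intro polyfun_diff polyfun.mult polyfun_matrix_vector_mult polyfun_cam_coords_cam_entry
      polyfun.const)

lemma exists_camera_center_axis: "\<exists>K::complex^4^3. center_vec K = axis c 1"
proof -
  define K :: "complex^4 \<Rightarrow> complex^4 \<Rightarrow> complex^4 \<Rightarrow> complex^4^3"
    where "K a b c = (\<chi> r. if r = 1 then a else if r = 2 then b else c)" for a b c
  have rows: "K a b c $ 1 = a" "K a b c $ 2 = b" "K a b c $ 3 = c" for a b c
    by (simp_all add: K_def)
  consider "c = 1" | "c = 2" | "c = 3" | "c = 4" using exhaust_4 by blast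
  then show ?thesis
  proof cases
    case 1
    have "center_vec (K (- axis 2 1) (axis 3 1) (axis 4 1)) = axis 1 1"
      by (simp add: center_vec_def cross4_def rows vec_eq_iff forall_4 det4_expand axis_1_nth)
    with 1 show ?thesis by blast
  next
    case 2
    have "center_vec (K (axis 1 1) (axis 3 1) (axis 4 1)) = axis 2 1"
      by (simp add: center_vec_def cross4_def rows vec_eq_iff forall_4 det4_expand axis_1_nth)
    with 2 show ?thesis by blast
  next
    case 3
    have "center_vec (K (- axis 1 1) (axis 2 1) (axis 4 1)) = axis 3 1"
      by (simp add: center_vec_def cross4_def rows vec_eq_iff forall_4 det4_expand axis_1_nth)
    with 3 show ?thesis by blast
  next
    case 4
    have "center_vec (K (axis 1 1) (axis 2 1) (axis 3 1)) = axis 4 1"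
      by (simp add: center_vec_def cross4_def rows vec_eq_iff forall_4 det4_expand axis_1_nth)
    with 4 show ?thesis by blast
  qed
qed

lemma exists_camera_cam_line_nonzero:
  assumes "lin_indep2 u v"
  shows "\<exists>K::complex^4^3. cam_line K u v \<noteq> 0"
proof -
  obtain a b where ab: "u$a * v$b - u$b * v$a \<noteq> 0"
    using lin_indep2_has_nonzero_minor[OF assms] by blast
  define K :: "complex^4^3" where "K = (\<chi> r. if r = 2 then axis a 1 else if r = 3 then axis b 1 else 0)"
  have "cam_line K u v $ 1 = u$a * v$b - u$b * v$a"
    by (simp add: K_def cam_line_def cross3c_nth matrix_vector_mult_nth tdot_axis)
  with ab have "cam_line K u v \<noteq> 0" by auto
  then show ?thesis by blast
qed

lemma generic_line_misses_centers:
  assumes "lin_indep2 u v"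
  shows "generic_arr m (\<lambda>C. \<forall>i<m. cam_line (C i) u v \<noteq> 0)"
proof -
  obtain K where K: "cam_line K u v \<noteq> 0" using exists_camera_cam_line_nonzero[OF assms] by blast
  have "generic_arr m (\<lambda>C. cam_line (C i) u v \<noteq> 0)" if "i \<in> {..<m}" for i
  proof (rule generic_arr_vec_nonzero)
    show "(\<lambda>C. cam_line (C i) u v $ k) \<in> polyfun (cam_coords m)" for k
      using that by (simp add: polyfun_cam_line)
    show "cam_line ((\<lambda>_. K) i) u v \<noteq> 0" using K by simp
  qed
  then have "generic_arr m (\<lambda>C. \<forall>i\<in>{..<m}. cam_line (C i) u v \<noteq> 0)"
    by (rule generic_arr_ball[OF finite_lessThan])
  then show ?thesis by (rule generic_arr_mono) simp
qed

lemma generic_line_skew_to_baselines: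
  assumes "lin_indep2 u v"
  shows "generic_arr m
    (\<lambda>C. \<forall>j. 1 \<le> j \<and> j < m \<longrightarrow> det4 (center_vec (C 0)) u (center_vec (C j)) v \<noteq> 0)"
proof -
  obtain c d where cd: "det4 (axis c 1) u (axis d 1) v \<noteq> 0"
    using exists_axes_det4_uv_nonzero[OF assms] by blast
  obtain K\<^sub>c K\<^sub>d where K: "center_vec K\<^sub>c = axis c 1" "center_vec K\<^sub>d = axis d 1"
    using exists_camera_center_axis by metis
  have "generic_arr m (\<lambda>C. det4 (center_vec (C 0)) u (center_vec (C j)) v \<noteq> 0)"
    if j: "j \<in> {1..<m}" for j
  proof (rule generic_arr_nonzero)
    show "(\<lambda>C. det4 (center_vec (C 0)) u (center_vec (C j)) v) \<in> polyfun (cam_coords m)"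
      using j by (intro polyfun_det4 polyfun_center_vec polyfun.const) auto
    show "det4 (center_vec ((\<lambda>i. if i = 0 then K\<^sub>c else K\<^sub>d) 0)) u
        (center_vec ((\<lambda>i. if i = 0 then K\<^sub>c else K\<^sub>d) j)) v \<noteq> 0"
      using j cd K by simp
  qed
  then have "generic_arr m
      (\<lambda>C. \<forall>j\<in>{1..<m}. det4 (center_vec (C 0)) u (center_vec (C j)) v \<noteq> 0)"
    by (rule generic_arr_ball[OF finite_atLeastLessThan])
  then show ?thesis by (rule generic_arr_mono) simp
qed

lemma generic_noncollinear_centers:
  assumes "m \<ge> 2" and "X \<noteq> 0"
  shows "generic_arr m (\<lambda>C. noncollinear_centers m C X)"
proof -
  obtain c d e where "det4 (axis c 1) (axis d 1) (axis e 1) X \<noteq> 0"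
    using exists_axes_det4_nonzero[OF assms(2)] by blast
  then have cde: "det4 X (axis c 1) (axis d 1) (axis e 1) \<noteq> 0"
    using det4_rotate[of X "axis c 1" "axis d 1" "axis e 1"] by simp
  obtain K\<^sub>c K\<^sub>d where K: "center_vec K\<^sub>c = axis c 1" "center_vec K\<^sub>d = axis d 1"
    using exists_camera_center_axis by metis
  have "generic_arr m (\<lambda>C. det4 X (center_vec (C i)) (center_vec (C j)) (axis e 1) \<noteq> 0)"
    if ij: "i \<in> {..<m}" "j \<in> {..<m} - {i}" for i j
  proof (rule generic_arr_nonzero)
    show "(\<lambda>C. det4 X (center_vec (C i)) (center_vec (C j)) (axis e 1)) \<in> polyfun (cam_coords m)"
      using ij by (intro polyfun_det4 polyfun_center_vec polyfun.const) auto
    show "det4 X (center_vec ((\<lambda>k. if k = i then K\<^sub>c else K\<^sub>d) i))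
        (center_vec ((\<lambda>k. if k = i then K\<^sub>c else K\<^sub>d) j)) (axis e 1) \<noteq> 0"
      using ij cde K by simp
  qed
  then have "generic_arr m (\<lambda>C. \<forall>j\<in>{..<m} - {i}.
      det4 X (center_vec (C i)) (center_vec (C j)) (axis e 1) \<noteq> 0)" if "i \<in> {..<m}" for i
    using that by (intro generic_arr_ball) auto
  then have "generic_arr m (\<lambda>C. \<forall>i\<in>{..<m}. \<forall>j\<in>{..<m} - {i}.
      det4 X (center_vec (C i)) (center_vec (C j)) (axis e 1) \<noteq> 0)"
    by (rule generic_arr_ball[OF finite_lessThan])
  then show ?thesis
  proof (rule generic_arr_mono)
    fix C
    assume det: "\<forall>i\<in>{..<m}. \<forall>j\<in>{..<m} - {i}.
      det4 X (center_vec (C i)) (center_vec (C j)) (axis e 1) \<noteq> 0"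
    show "noncollinear_centers m C X"
    proof
      show "m \<ge> 2" by (rule assms(1))
      fix i j assume "i < m" "j < m" "i \<noteq> j"
      with det have "det4 X (center_vec (C i)) (center_vec (C j)) (axis e 1) \<noteq> 0" by blast
      then show "\<not> cols_dependent3 X (center_vec (C i)) (center_vec (C j))"
        using det4_eq_0_if_cols_dependent3 by blast
    qed
  qed
qed

lemma generic_point_off_plane_of_centers:
  assumes "X \<noteq> 0"
  shows "generic_arr m
    (\<lambda>C. 3 \<le> m \<longrightarrow> det4 (center_vec (C 0)) (center_vec (C 1)) (center_vec (C 2)) X \<noteq> 0)"
proof (cases "3 \<le> m")
  case True
  obtain c d e where cde: "det4 (axis c 1) (axis d 1) (axis e 1) X \<noteq> 0"
    using exists_axes_det4_nonzero[OF assms] by blast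
  obtain K\<^sub>c K\<^sub>d K\<^sub>e where K: "center_vec K\<^sub>c = axis c 1" "center_vec K\<^sub>d = axis d 1"
    "center_vec K\<^sub>e = axis e 1"
    using exists_camera_center_axis by metis
  define C\<^sub>0 where "C\<^sub>0 i = (if i = 0 then K\<^sub>c else if i = 1 then K\<^sub>d else K\<^sub>e)" for i :: nat
  have "generic_arr m (\<lambda>C. det4 (center_vec (C 0)) (center_vec (C 1)) (center_vec (C 2)) X \<noteq> 0)"
  proof (rule generic_arr_nonzero)
    show "(\<lambda>C. det4 (center_vec (C 0)) (center_vec (C 1)) (center_vec (C 2)) X)
        \<in> polyfun (cam_coords m)"
      using True by (intro polyfun_det4 polyfun_center_vec polyfun.const) auto
    show "det4 (center_vec (C\<^sub>0 0)) (center_vec (C\<^sub>0 1)) (center_vec (C\<^sub>0 2)) X \<noteq> 0"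
      using cde K by (simp add: C\<^sub>0_def)
  qed
  then show ?thesis by (rule generic_arr_mono) simp
next
  case False
  from generic_arr_True show ?thesis by (rule generic_arr_mono) (use False in simp)
qed

theorem proposition1p5:
  fixes m :: nat and X u v :: "complex^4"
  assumes "m \<ge> 2" and "X \<noteq> 0" and "lin_indep2 u v"
  shows "generic_arr m (\<lambda>C.
      (\<forall>x. (\<forall>i<m. x i \<noteq> 0) \<longrightarrow>
         (x \<in> M_L m C u v \<longleftrightarrow>
            (\<forall>j. 1 \<le> j \<and> j < m \<longrightarrow> tdot (x 0) (fundamental (C 0) (C j) *v x j) = 0) \<and>
            (\<forall>i<m. tdot (x i) (cam_line (C i) u v) = 0))) \<and>
      (\<forall>l. (\<forall>i<m. l i \<noteq> 0) \<longrightarrow>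
         (l \<in> L_X m C X \<longleftrightarrow>
            (\<forall>i. 2 \<le> i \<and> i < m \<longrightarrow>
               cols_dependent3 (transpose (C 0) *v l 0) (transpose (C 1) *v l 1) (transpose (C i) *v l i) \<and>
               cols_dependent3 (transpose (C 0) *v l 0) (transpose (C 2) *v l 2) (transpose (C i) *v l i)) \<and>
            (\<forall>i<m. tdot (l i) (C i *v X) = 0))))"
proof -
  have "generic_arr m (\<lambda>C. ((\<forall>i<m. cam_line (C i) u v \<noteq> 0) \<and>
      (\<forall>j. 1 \<le> j \<and> j < m \<longrightarrow> det4 (center_vec (C 0)) u (center_vec (C j)) v \<noteq> 0)) \<and>
      (noncollinear_centers m C X \<and>
      (3 \<le> m \<longrightarrow> det4 (center_vec (C 0)) (center_vec (C 1)) (center_vec (C 2)) X \<noteq> 0)))"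
    using assms
    by (intro generic_arr_conj generic_line_misses_centers generic_line_skew_to_baselines
        generic_noncollinear_centers generic_point_off_plane_of_centers)
  then show ?thesis
    by (rule generic_arr_mono)
      (simp add: mem_M_L_iff[OF assms(1)] noncollinear_centers.mem_L_X_iff[OF _ assms(2)])
qed

end
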